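(* Let $d\ge2$, $T\ge2$, $\eta>0$. Consider the Bandit-PCA Online Mirror Descent algorithm run either with sparse sampling and any $\gamma\in[0,1]$, or with dense sampling and $\gamma=0$, against an adaptive environment with symmetric loss matrices of spectral norm at most $1$. Assume that almost surely, for every $t$, the matrix $\boldsymbol{W}_t^{-1}+\eta\widetilde{\boldsymbol{L}}_t$ is positive definite (so that $\widetilde{\boldsymbol{W}}_{t+1}=(\boldsymbol{W}_t^{-1}+\eta\widetilde{\boldsymbol{L}}_t)^{-1}$ and $\boldsymbol{W}_{t+1}$ are well-defined positive definite matrices). Then \[ \mathrm{regret}_T\le\frac{d\log T}{\eta}+2\gamma T+2+(1-\gamma)\sum_{t=1}^T\mathbb{E}\big[\langle\boldsymbol{W}_t-\widetilde{\boldsymbol{W}}_{t+1},\widetilde{\boldsymbol{L}}_t\rangle\big]. \]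
   Context: Notation: $\langle \boldsymbol{A},\boldsymbol{B}\rangle=\mathrm{tr}(\boldsymbol{A}^\top \boldsymbol{B})$; a density matrix is a symmetric positive semidefinite $d\times d$ matrix of trace $1$; $\mathcal{W}$ is the set of density matrices. Protocol: in rounds $t=1,\dots,T$ the learner picks a (possibly random) unit vector $\boldsymbol{w}_t\in\mathbb{R}^d$; the environment picks a symmetric $\boldsymbol{L}_t$ with spectral norm $\le1$, possibly depending on the past but not on $\boldsymbol{w}_t$; the learner observes only $\ell_t=\boldsymbol{w}_t^\top\boldsymbol{L}_t\boldsymbol{w}_t$. Regret: $\mathrm{regret}_T=\max_{\|\boldsymbol{u}\|=1}\sum_{t=1}^T\mathbb{E}[\langle\boldsymbol{w}_t\boldsymbol{w}_t^\top-\boldsymbol{u}\boldsymbol{u}^\top,\boldsymbol{L}_t\rangle]$. Algorithm (parameters $\eta>0$, $\gamma\in[0,1]$): $\boldsymbol{W}_1=\boldsymbol{I}/d$. In round $t$, eigendecompose $\boldsymbol{W}_t=\sum_i\mu_i\boldsymbol{u}_i\boldsymbol{u}_i^\top$ and set $\lambda_i=(1-\gamma)\mu_i+\gamma/d$; draw $\boldsymbol{w}_t$ and form $\widetilde{\boldsymbol{L}}_t$ by a sampling procedure; set $\widetilde{\boldsymbol{W}}_{t+1}=(\boldsymbol{W}_t^{-1}+\eta\widetilde{\boldsymbol{L}}_t)^{-1}$ and $\boldsymbol{W}_{t+1}=\arg\min_{\boldsymbol{W}\in\mathcal{W}}D(\boldsymbol{W}\|\widetilde{\boldsymbol{W}}_{t+1})$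 with $D(\boldsymbol{W}\|\boldsymbol{U})=\mathrm{tr}(\boldsymbol{U}^{-1}\boldsymbol{W})-\log\det(\boldsymbol{U}^{-1}\boldsymbol{W})-d$. Dense sampling (with $\gamma=0$): draw $B\sim\mathrm{Bernoulli}(1/2)$. If $B=1$, draw $I$ with $\Pr(I=i)=\lambda_i$, $\boldsymbol{w}_t=\boldsymbol{u}_I$, $\widetilde{\boldsymbol{L}}_t=2\ell_t\boldsymbol{W}_t^{-1/2}\boldsymbol{w}_t\boldsymbol{w}_t^\top\boldsymbol{W}_t^{-1/2}$. If $B=0$, draw i.i.d. uniform signs $\boldsymbol{s}\in\{-1,1\}^d$, $\boldsymbol{w}_t=\sum_is_i\sqrt{\lambda_i}\boldsymbol{u}_i$, $\widetilde{\boldsymbol{L}}_t=\ell_t(\boldsymbol{W}_t^{-1}\boldsymbol{w}_t\boldsymbol{w}_t^\top\boldsymbol{W}_t^{-1}-\boldsymbol{W}_t^{-1})$. Sparse sampling: draw $I,J$ independently with $\Pr(I=i)=\Pr(J=i)=\lambda_i$. If $I=J$: $\boldsymbol{w}_t=\boldsymbol{u}_I$, $\widetilde{\boldsymbol{L}}_t=(\ell_t/\lambda_I^2)\boldsymbol{u}_I\boldsymbol{u}_I^\top$. If $I\ne J$: draw a uniform sign $s\in\{-1,1\}$, $\boldsymbol{w}_t=(\boldsymbol{u}_I+s\boldsymbol{u}_J)/\sqrt2$, $\widetilde{\boldsymbol{L}}_t=\frac{s\ell_t}{2\lambda_I\lambda_J}(\boldsymbol{u}_I\boldsymbol{u}_J^\top+\boldsymbol{u}_J\boldsymbol{u}_I^\top)$.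 *)

theory Defs
  imports "HOL-Analysis.Analysis" "HOL-Probability.Probability"
begin

type_synonym 'n rvec = "real^'n"
type_synonym 'n rmat = "real^'n^'n"

definition outer :: "'n::finite rvec \<Rightarrow> 'n rvec \<Rightarrow> 'n rmat" where
  "outer u v = (\<chi> i j. u$i * v$j)"

definition frob :: "'n::finite rmat \<Rightarrow> 'n rmat \<Rightarrow> real" where
  "frob A B = trace (transpose A ** B)"

definition symmetric_mat :: "'n::finite rmat \<Rightarrow> bool" where
  "symmetric_mat A \<longleftrightarrow> transpose A = A"

definition posdef :: "'n::finite rmat \<Rightarrow> bool" where
  "posdef A \<longleftrightarrow> symmetric_mat A \<and> (\<forall>x. x \<noteq> 0 \<longrightarrow> x \<bullet> (A *v x) > 0)"

definition psd :: "'n::finite rmat \<Rightarrow> bool" where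
  "psd A \<longleftrightarrow> symmetric_mat A \<and> (\<forall>x. x \<bullet> (A *v x) \<ge> 0)"

definition density :: "'n::finite rmat \<Rightarrow> bool" where
  "density A \<longleftrightarrow> psd A \<and> trace A = 1"

definition spec_norm :: "'n::finite rmat \<Rightarrow> real" where
  "spec_norm A = onorm (\<lambda>x. A *v x)"

text \<open>An eigendecomposition oracle: returns eigenvalues mu and orthonormal eigenvectors u
  with A = sum_i mu_i u_i u_i^T (for symmetric A).  The algorithm may use any such choice.\<close>
type_synonym 'n eigfun = "'n rmat \<Rightarrow> ('n \<Rightarrow> real) \<times> ('n \<Rightarrow> 'n rvec)"

definition valid_eig :: "'n::finite eigfun \<Rightarrow> bool" where
  "valid_eig eig \<longleftrightarrow> (\<forall>A. symmetric_mat A \<longrightarrow>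
     (\<forall>i j. snd (eig A) i \<bullet> snd (eig A) j = (if i = j then 1 else 0)) \<and>
     A = (\<Sum>i\<in>UNIV. fst (eig A) i *\<^sub>R outer (snd (eig A) i) (snd (eig A) i)))"

definition logdet_div :: "'n::finite rmat \<Rightarrow> 'n rmat \<Rightarrow> real" where
  "logdet_div W U = trace (matrix_inv U ** W) - ln (det (matrix_inv U ** W)) - real CARD('n)"

text \<open>Projection onto density matrices w.r.t. D.  D(W||U) = +infinity for singular W,
  so the minimisation is over positive definite density matrices.\<close>
definition proj :: "'n::finite rmat \<Rightarrow> 'n rmat" where
  "proj U = (SOME W. density W \<and> posdef W \<and>
      (\<forall>V. density V \<and> posdef V \<longrightarrow> logdet_div W U \<le> logdet_div V U))"

definition W1 :: "'n::finite rmat" where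
  "W1 = (1 / real CARD('n)) *\<^sub>R mat 1"

definition Wtil :: "real \<Rightarrow> 'n::finite rmat \<Rightarrow> 'n rmat \<Rightarrow> 'n rmat" where
  "Wtil \<eta> W Lt = matrix_inv (matrix_inv W + \<eta> *\<^sub>R Lt)"

text \<open>History: list of rounds (L_t, w_t, Ltilde_t).\<close>
type_synonym 'n hist = "('n rmat \<times> 'n rvec \<times> 'n rmat) list"

fun Wfrom :: "real \<Rightarrow> 'n::finite rmat \<Rightarrow> 'n hist \<Rightarrow> 'n rmat" where
  "Wfrom \<eta> W [] = W"
| "Wfrom \<eta> W ((L, w, Lt) # h) = Wfrom \<eta> (proj (Wtil \<eta> W Lt)) h"

text \<open>W_t (t counted from 0, so Wt eta h 0 = W_1) for history h.\<close>
definition Wt :: "real \<Rightarrow> 'n::finite hist \<Rightarrow> nat \<Rightarrow> 'n rmat" where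
  "Wt \<eta> h t = Wfrom \<eta> W1 (take t h)"

datatype sampling = Sparse | Dense

definition sgn_of :: "bool \<Rightarrow> real" where
  "sgn_of b = (if b then 1 else -1)"

definition inv_sqrt :: "'n::finite eigfun \<Rightarrow> 'n rmat \<Rightarrow> 'n rmat" where
  "inv_sqrt eig W = (\<Sum>i\<in>UNIV. (1 / sqrt (fst (eig W) i)) *\<^sub>R outer (snd (eig W) i) (snd (eig W) i))"

text \<open>One round of sampling: given the current iterate W and the (hidden) loss L,
  returns the distribution of (w_t, Ltilde_t); the estimate uses only ell_t = w^T L w.\<close>
definition samp :: "sampling \<Rightarrow> real \<Rightarrow> 'n::finite eigfun \<Rightarrow> 'n rmat \<Rightarrow> 'n rmat
                     \<Rightarrow> ('n rvec \<times> 'n rmat) pmf" where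
  "samp mode \<gamma> eig W L =
    (let \<mu> = fst (eig W); u = snd (eig W);
         lam = (\<lambda>i. (1 - \<gamma>) * \<mu> i + \<gamma> / real CARD('n));
         ell = (\<lambda>w. w \<bullet> (L *v w));
         Pl = embed_pmf lam;
         Wi = matrix_inv W
     in case mode of
       Sparse \<Rightarrow>
         bind_pmf Pl (\<lambda>I. bind_pmf Pl (\<lambda>J. bind_pmf (pmf_of_set (UNIV :: bool set)) (\<lambda>s.
           return_pmf
             (if I = J then (u I, (ell (u I) / (lam I)^2) *\<^sub>R outer (u I) (u I))
              else (let w = (1 / sqrt 2) *\<^sub>R (u I + sgn_of s *\<^sub>R u J)
                    in (w, (sgn_of s * ell w / (2 * lam I * lam J)) *\<^sub>R
                             (outer (u I) (u J) + outer (u J) (u I))))))))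
     | Dense \<Rightarrow>
         bind_pmf (bernoulli_pmf (1/2)) (\<lambda>B.
           if B then
             bind_pmf Pl (\<lambda>I. return_pmf
               (u I, (2 * ell (u I)) *\<^sub>R (inv_sqrt eig W ** outer (u I) (u I) ** inv_sqrt eig W)))
           else
             bind_pmf (pmf_of_set (UNIV :: ('n \<Rightarrow> bool) set)) (\<lambda>s.
               (let w = (\<Sum>i\<in>UNIV. (sgn_of (s i) * sqrt (lam i)) *\<^sub>R u i)
                in return_pmf (w, ell w *\<^sub>R (Wi ** outer w w ** Wi - Wi))))))"

text \<open>Distribution of the history after k rounds; env is the adaptive environment,
  choosing L_t as a function of the past (all previous losses, plays and estimates).\<close>
fun traj :: "sampling \<Rightarrow> real \<Rightarrow> real \<Rightarrow> 'n::finite eigfun \<Rightarrow> ('n hist \<Rightarrow> 'n rmat)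
               \<Rightarrow> nat \<Rightarrow> 'n hist pmf" where
  "traj mode \<gamma> \<eta> eig env 0 = return_pmf []"
| "traj mode \<gamma> \<eta> eig env (Suc k) =
     bind_pmf (traj mode \<gamma> \<eta> eig env k) (\<lambda>h.
       map_pmf (\<lambda>(w, Lt). h @ [(env h, w, Lt)])
         (samp mode \<gamma> eig (Wfrom \<eta> W1 h) (env h)))"

definition Lh :: "'n::finite hist \<Rightarrow> nat \<Rightarrow> 'n rmat" where "Lh h t = fst (h ! t)"
definition wh :: "'n::finite hist \<Rightarrow> nat \<Rightarrow> 'n rvec" where "wh h t = fst (snd (h ! t))"
definition Lth :: "'n::finite hist \<Rightarrow> nat \<Rightarrow> 'n rmat" where "Lth h t = snd (snd (h ! t))"

definition regret :: "sampling \<Rightarrow> real \<Rightarrow> real \<Rightarrow> 'n::finite eigfun \<Rightarrow> ('n hist \<Rightarrow> 'n rmat)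
                       \<Rightarrow> nat \<Rightarrow> real" where
  "regret mode \<gamma> \<eta> eig env T =
     (SUP u\<in>{u::'n rvec. norm u = 1}. \<Sum>t<T.
        measure_pmf.expectation (traj mode \<gamma> \<eta> eig env T)
          (\<lambda>h. frob (outer (wh h t) (wh h t) - outer u u) (Lh h t)))"

end

theory Submission
  imports Defs
begin

text \<open>
  Fix a unit vector \<open>u\<close> and the comparator \<open>U = (1 - 1/T) u u\<^sup>T + I/(d T)\<close>, a positive
  definite density matrix with eigenvalues at least \<open>1/(d T)\<close>, so that \<open>D(U, W\<^sub>1) \<le> d log T\<close>.
  Both sampling schemes give unbiased estimates \<open>E[L\<^sup>~\<^sub>t] = L\<^sub>t\<close>, and the played vector has
  expected loss \<open>\<langle>(1 - \<gamma>) W\<^sub>t + \<gamma> I/d, L\<^sub>t\<rangle>\<close>; hence the expected regret of round \<open>t\<close>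
  against \<open>u\<close> is at most \<open>(1 - \<gamma>) \<langle>W\<^sub>t - U, L\<^sub>t\<rangle> + 2 \<gamma> + 2/T\<close>. Finally, the three-point
  identity of the log-determinant divergence and the generalised Pythagorean inequality of the
  projection give
  \<open>\<eta> \<langle>W\<^sub>t - U, L\<^sup>~\<^sub>t\<rangle> \<le> D(U, W\<^sub>t) - D(U, W\<^sub>t\<^sub>+\<^sub>1) + \<eta> \<langle>W\<^sub>t - W\<^sup>~\<^sub>t\<^sub>+\<^sub>1, L\<^sup>~\<^sub>t\<rangle>\<close>,
  which telescopes.
\<close>

section \<open>Outer products and the Frobenius product\<close>

lemma outer_component[simp]: "outer u v $ i $ j = u$i * v$j"
  by (simp add: outer_def)

lemma outer_matrix_vector_mult: "outer a b *v x = (b \<bullet> x) *\<^sub>R a"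
  by (simp add: vec_eq_iff matrix_vector_mult_def inner_vec_def sum_distrib_left sum_distrib_right mult_ac)

lemma matrix_mult_outer: "A ** outer a b = outer (A *v a) b"
  by (simp add: vec_eq_iff matrix_matrix_mult_def matrix_vector_mult_def sum_distrib_right mult.assoc)

lemma outer_mult_matrix: "outer a b ** A = outer a (transpose A *v b)"
  by (simp add: vec_eq_iff matrix_matrix_mult_def matrix_vector_mult_def transpose_def sum_distrib_left mult_ac)

lemma transpose_outer: "transpose (outer a b) = outer b a"
  by (simp add: vec_eq_iff transpose_def)

lemma trace_outer: "trace (outer a b) = a \<bullet> b"
  by (simp add: trace_def inner_vec_def)

lemma outer_scaleR_right: "outer a (c *\<^sub>R b) = c *\<^sub>R outer a b"
  by (simp add: vec_eq_iff)

lemma frob_eq_sum: "frob A B = (\<Sum>i\<in>UNIV. \<Sum>j\<in>UNIV. A$i$j * B$i$j)"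
  unfolding frob_def trace_def matrix_matrix_mult_def transpose_def
  by simp (rule sum.swap)

lemma frob_outer_right: "frob A (outer x y) = x \<bullet> (A *v y)"
  unfolding frob_eq_sum
    by (simp add: inner_vec_def matrix_vector_mult_def sum_distrib_left sum_distrib_right mult_ac)

lemma frob_outer_left: "frob (outer x y) A = x \<bullet> (A *v y)"
  unfolding frob_eq_sum
    by (simp add: inner_vec_def matrix_vector_mult_def sum_distrib_left sum_distrib_right mult_ac)

lemma frob_commute: "frob A B = frob B A"
  unfolding frob_eq_sum by (simp add: mult.commute)

lemma frob_add_left: "frob (A + B) C = frob A C + frob B C"
  unfolding frob_eq_sum by (simp add: algebra_simps sum.distrib)
lemma frob_diff_left: "frob (A - B) C = frob A C - frob B C"
  unfolding frob_eq_sum by (simp add: algebra_simps sum_subtractf)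
lemma frob_scale_left: "frob (c *\<^sub>R A) C = c * frob A C"
  unfolding frob_eq_sum by (simp add: algebra_simps sum_distrib_left)
lemma frob_add_right: "frob C (A + B) = frob C A + frob C B"
  by (subst (1 2 3) frob_commute) (rule frob_add_left)
lemma frob_diff_right: "frob C (A - B) = frob C A - frob C B"
  by (subst (1 2 3) frob_commute) (rule frob_diff_left)
lemma frob_scale_right: "frob C (c *\<^sub>R A) = c * frob C A"
  by (subst (1 2) frob_commute) (rule frob_scale_left)

lemma frob_uminus_right: "frob C (- A) = - frob C A"
  unfolding frob_eq_sum by (simp add: sum_negf)

lemma frob_symmetric_eq_trace: "transpose A = A \<Longrightarrow> frob A B = trace (A ** B)"
  by (simp add: frob_def)

lemma frob_mat_1: "frob (mat 1) L = trace L"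
  by (simp add: frob_def)

lemma matrix_mult_sum_left: "(\<Sum>k\<in>S. f k) ** (B::real^'n^'n) = (\<Sum>k\<in>S. f k ** B)"
  by (cases "finite S"; simp add: vec_eq_iff matrix_matrix_mult_def sum_component sum_distrib_right)
    (subst sum.swap, simp)

lemma matrix_mult_sum_right: "(B::real^'n^'n) ** (\<Sum>k\<in>S. f k) = (\<Sum>k\<in>S. B ** f k)"
  by (cases "finite S"; simp add: vec_eq_iff matrix_matrix_mult_def sum_component sum_distrib_left)
    (subst sum.swap, simp)

lemma matrix_vector_mult_sum_left: "(\<Sum>k\<in>S. f k) *v (x::real^'n) = (\<Sum>k\<in>S. f k *v x)"
  by (cases "finite S"; simp add: vec_eq_iff matrix_vector_mult_def sum_component sum_distrib_right)
    (subst sum.swap, simp)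

lemma matrix_vector_mult_sum_right: "(A::real^'n^'n) *v (\<Sum>k\<in>S. f k) = (\<Sum>k\<in>S. A *v f k)"
  by (cases "finite S"; simp add: vec_eq_iff matrix_vector_mult_def sum_component sum_distrib_left)
    (subst sum.swap, simp)

lemma scaleR_matrix_vector_mult: "(c *\<^sub>R A) *v (x::real^'n) = c *\<^sub>R (A *v x)"
  by (simp add: vec_eq_iff matrix_vector_mult_def sum_distrib_left mult_ac)

lemma matrix_add_rdistrib: "((A::real^'n::finite^'n) + B) ** C = A ** C + B ** C"
  by (simp add: vec_eq_iff matrix_matrix_mult_def sum.distrib algebra_simps)
lemma matrix_diff_rdistrib: "((A::real^'n::finite^'n) - B) ** C = A ** C - B ** C"
  by (simp add: vec_eq_iff matrix_matrix_mult_def sum_subtractf algebra_simps)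

lemma transpose_sum: "transpose (\<Sum>k\<in>S. f k) = (\<Sum>k\<in>S. transpose (f k :: real^'n^'n))"
  by (cases "finite S"; simp add: vec_eq_iff transpose_def sum_component)

lemma transpose_add: "transpose ((A::real^'n::finite^'n) + B) = transpose A + transpose B"
  by (simp add: vec_eq_iff transpose_def)
lemma transpose_diff: "transpose ((A::real^'n::finite^'n) - B) = transpose A - transpose B"
  by (simp add: vec_eq_iff transpose_def)

lemma trace_sum: "trace (\<Sum>k\<in>S. f k) = (\<Sum>k\<in>S. trace (f k :: real^'n^'n))"
  by (cases "finite S"; simp add: trace_def sum_component) (subst sum.swap, simp)

lemma trace_scaleR: "trace (c *\<^sub>R (A::real^'n^'n)) = c * trace A"
  by (simp add: trace_def sum_distrib_left)

lemma inner_matrix_vector_transpose: "x \<bullet> ((A::real^'n^'n) *v y) = (transpose A *v x) \<bullet> y"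
  by (simp add: inner_vec_def matrix_vector_mult_def transpose_def sum_distrib_left sum_distrib_right mult_ac)
     (subst sum.swap, simp)

lemma inner_transpose_matrix_vector: "x \<bullet> (transpose A *v y) = ((A::real^'n^'n) *v x) \<bullet> y"
  using inner_matrix_vector_transpose[of x "transpose A" y] by simp

lemma symmetric_coeff:
  "transpose L = L \<Longrightarrow> u i \<bullet> ((L::real^'n::finite^'n) *v u j) = u j \<bullet> (L *v u i)"
  using inner_matrix_vector_transpose[of "u i" L "u j"] by (simp add: inner_commute)

lemma quadratic_form_pair:
  "(a *\<^sub>R x + b *\<^sub>R y) \<bullet> ((L::real^'n::finite^'n) *v (a *\<^sub>R x + b *\<^sub>R y)) =
   a*a*(x \<bullet> (L *v x)) + a*b*(x \<bullet> (L *v y)) + b*a*(y \<bullet> (L *v x)) + b*b*(y \<bullet> (L *v y))"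
  by (simp add: matrix_vector_right_distrib matrix_vector_mult_scaleR inner_add_left inner_add_right algebra_simps)

lemma bilinear_form_expansion:
  "(\<Sum>i\<in>UNIV. a i *\<^sub>R u i) \<bullet> ((M::real^'n::finite^'n) *v (\<Sum>j\<in>UNIV. b j *\<^sub>R u j)) =
   (\<Sum>i\<in>UNIV. \<Sum>j\<in>UNIV. a i * b j * (u i \<bullet> (M *v u j)))"
  by (simp add: matrix_vector_mult_sum_right matrix_vector_mult_scaleR inner_sum_left inner_sum_right
      sum_distrib_left mult_ac) (rule sum.swap)

lemma abs_quadratic_form_le:
  fixes L :: "real^'n::finite^'n"
  assumes "spec_norm L \<le> 1"
  shows "\<bar>x \<bullet> (L *v x)\<bar> \<le> norm x * norm x"
proof -
  have "\<bar>x \<bullet> (L *v x)\<bar> \<le> norm x * norm (L *v x)" by (rule Cauchy_Schwarz_ineq2)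
  also have "norm (L *v x) \<le> onorm (\<lambda>x. L *v x) * norm x"
    by (rule onorm) (rule matrix_vector_mul_bounded_linear)
  also have "\<dots> \<le> 1 * norm x" using assms unfolding spec_norm_def by (intro mult_right_mono) auto
  finally show ?thesis by (simp add: mult_left_mono)
qed

section \<open>Spectral calculus in an orthonormal basis\<close>

definition orthonormal :: "('n::finite \<Rightarrow> real^'n) \<Rightarrow> bool" where
  "orthonormal u \<longleftrightarrow> (\<forall>i j. u i \<bullet> u j = (if i = j then 1 else 0))"

definition spectral :: "('n::finite \<Rightarrow> real) \<Rightarrow> ('n \<Rightarrow> real^'n) \<Rightarrow> real^'n^'n" where
  "spectral f u = (\<Sum>i\<in>UNIV. f i *\<^sub>R outer (u i) (u i))"

lemma orthonormal_outer_sum: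
  assumes "orthonormal u" shows "(\<Sum>i\<in>UNIV. outer (u i) (u i)) = mat 1"
proof -
  define Q where "Q = (\<chi> a b. u b $ a)"
  have "transpose Q ** Q = mat 1"
    using assms
    by (simp add: vec_eq_iff matrix_matrix_mult_def transpose_def Q_def mat_def orthonormal_def inner_vec_def)
  hence "Q ** transpose Q = mat 1" by (simp add: matrix_left_right_inverse)
  thus ?thesis
    by (simp add: vec_eq_iff matrix_matrix_mult_def transpose_def Q_def sum_component)
qed

lemma orthonormal_expansion:
  assumes "orthonormal u" shows "x = (\<Sum>i\<in>UNIV. (u i \<bullet> x) *\<^sub>R u i)"
proof -
  have "x = mat 1 *v x" by simp
  also have "\<dots> = (\<Sum>i\<in>UNIV. outer (u i) (u i)) *v x" using orthonormal_outer_sum[OF assms] by simp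
  also have "\<dots> = (\<Sum>i\<in>UNIV. (u i \<bullet> x) *\<^sub>R u i)"
    by (simp add: matrix_vector_mult_sum_left outer_matrix_vector_mult)
  finally show ?thesis .
qed

lemma spectral_mult_basis:
  assumes "orthonormal u"
  shows "spectral f u *v u k = f k *\<^sub>R u k"
proof -
  have "spectral f u *v u k = (\<Sum>i\<in>UNIV. (f i * (u i \<bullet> u k)) *\<^sub>R u i)"
    by (simp add: spectral_def matrix_vector_mult_sum_left scaleR_matrix_vector_mult outer_matrix_vector_mult)
  also have "\<dots> = (\<Sum>i\<in>UNIV. (if i = k then f k *\<^sub>R u k else 0))"
    using assms by (intro sum.cong) (auto simp: orthonormal_def)
  finally show ?thesis by simp
qed

lemma inner_spectral_basis:
  assumes "orthonormal u"
  shows "u i \<bullet> (spectral f u *v u j) = (if i = j then f j else 0)"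
  using assms by (simp add: spectral_mult_basis orthonormal_def)

lemma transpose_spectral: "transpose (spectral f u) = spectral f u"
  by (simp add: spectral_def transpose_sum transpose_outer transpose_scalar)

lemma spectral_mult:
  assumes "orthonormal u"
  shows "spectral f u ** spectral g u = spectral (\<lambda>i. f i * g i) u"
proof -
  have "spectral f u ** spectral g u = (\<Sum>i\<in>UNIV. f i *\<^sub>R (outer (u i) (u i) ** spectral g u))"
    by (simp add: spectral_def matrix_mult_sum_left scalar_matrix_assoc)
  also have "\<dots> = (\<Sum>i\<in>UNIV. f i *\<^sub>R (g i *\<^sub>R outer (u i) (u i)))"
    by (simp add: outer_mult_matrix transpose_spectral spectral_mult_basis[OF assms] outer_scaleR_right)
  finally show ?thesis by (simp add: spectral_def)
qed

lemma spectral_one: "orthonormal u \<Longrightarrow> spectral (\<lambda>_. 1) u = mat 1"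
  by (simp add: spectral_def orthonormal_outer_sum)

lemma spectral_add: "spectral f u + spectral g u = spectral (\<lambda>i. f i + g i) u"
  by (simp add: spectral_def sum.distrib[symmetric] scaleR_add_left)

lemma scaleR_spectral: "c *\<^sub>R spectral f u = spectral (\<lambda>i. c * f i) u"
  by (simp add: spectral_def scaleR_sum_right)

lemma symmetric_spectral: "symmetric_mat (spectral f u)"
  by (simp add: symmetric_mat_def transpose_spectral)

lemma sum_square_coordinates:
  assumes "orthonormal u"
  shows "(\<Sum>i\<in>UNIV. (u i \<bullet> x)^2) = x \<bullet> x"
proof -
  have "x \<bullet> x = x \<bullet> (\<Sum>i\<in>UNIV. (u i \<bullet> x) *\<^sub>R u i)" using orthonormal_expansion[OF assms, of x] by simp
  also have "\<dots> = (\<Sum>i\<in>UNIV. (u i \<bullet> x)^2)"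
    by (simp add: inner_sum_right power2_eq_square inner_commute)
  finally show ?thesis by simp
qed

lemma quadratic_form_spectral: "x \<bullet> (spectral f u *v x) = (\<Sum>i\<in>UNIV. f i * (u i \<bullet> x)^2)"
  by (simp add: spectral_def matrix_vector_mult_sum_left scaleR_matrix_vector_mult outer_matrix_vector_mult
      inner_sum_right power2_eq_square inner_commute mult_ac)

lemma trace_spectral: "orthonormal u \<Longrightarrow> trace (spectral f u) = (\<Sum>i\<in>UNIV. f i)"
  by (simp add: spectral_def trace_sum trace_scaleR trace_outer orthonormal_def)

lemma det_spectral:
  assumes "orthonormal u"
  shows "det (spectral f u) = (\<Prod>i\<in>UNIV. f i)"
proof -
  define Q where "Q = (\<chi> a b. u b $ a)"
  define D where "D = (\<chi> a b. if a = b then f a else 0)"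
  have QQ: "transpose Q ** Q = mat 1"
    using assms
    by (simp add: vec_eq_iff matrix_matrix_mult_def transpose_def Q_def mat_def orthonormal_def inner_vec_def)
  have "spectral f u = Q ** D ** transpose Q"
  proof -
    have "\<And>a b. (Q ** D ** transpose Q) $ a $ b = (\<Sum>k\<in>UNIV. u k $ a * f k * u k $ b)"
      by (simp add: matrix_matrix_mult_def Q_def D_def transpose_def sum_distrib_right if_distrib
          if_distribR cong: if_cong)
    thus ?thesis by (simp add: vec_eq_iff spectral_def sum_component mult_ac)
  qed
  hence "det (spectral f u) = det Q * det D * det Q" by (simp add: det_mul)
  also have "det Q * det Q = 1"
    using QQ det_mul[of "transpose Q" Q] by simp
  hence "det Q * det D * det Q = det D" by (metis mult.commute mult.left_neutral mult.assoc)
  also have "det D = (\<Prod>i\<in>UNIV. f i)" by (subst det_diagonal) (auto simp: D_def)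
  finally show ?thesis .
qed

lemma trace_orthonormal:
  assumes "orthonormal u"
  shows "trace M = (\<Sum>i\<in>UNIV. u i \<bullet> (M *v u i))"
proof -
  have "trace M = trace (M ** (\<Sum>i\<in>UNIV. outer (u i) (u i)))"
    using orthonormal_outer_sum[OF assms] by simp
  also have "\<dots> = (\<Sum>i\<in>UNIV. (M *v u i) \<bullet> u i)"
    by (simp add: matrix_mult_sum_right trace_sum matrix_mult_outer trace_outer)
  finally show ?thesis by (simp add: inner_commute)
qed

lemma frob_orthonormal:
  assumes "orthonormal u"
  shows "frob A B = (\<Sum>i\<in>UNIV. \<Sum>j\<in>UNIV. (u i \<bullet> (A *v u j)) * (u i \<bullet> (B *v u j)))"
proof -
  have "frob A B = (\<Sum>j\<in>UNIV. u j \<bullet> ((transpose A ** B) *v u j))"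
    by (simp add: frob_def trace_orthonormal[OF assms])
  also have "\<dots> = (\<Sum>j\<in>UNIV. (A *v u j) \<bullet> (B *v u j))"
    by (simp only: matrix_vector_mul_assoc[symmetric] inner_transpose_matrix_vector)
  also have "\<dots> = (\<Sum>j\<in>UNIV. \<Sum>i\<in>UNIV. (u i \<bullet> (A *v u j)) * (u i \<bullet> (B *v u j)))"
  proof (rule sum.cong[OF refl])
    fix j
    have "(A *v u j) \<bullet> (B *v u j) = (\<Sum>i\<in>UNIV. (u i \<bullet> (A *v u j)) *\<^sub>R u i) \<bullet> (B *v u j)"
      using orthonormal_expansion[OF assms, of "A *v u j"] by simp
    thus "(A *v u j) \<bullet> (B *v u j) = (\<Sum>i\<in>UNIV. (u i \<bullet> (A *v u j)) * (u i \<bullet> (B *v u j)))"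
      by (simp add: inner_sum_left)
  qed
  finally show ?thesis
    by (simp add: sum.swap[of _ UNIV UNIV, where g="\<lambda>i j. (u i \<bullet> (A *v u j)) * (u i \<bullet> (B *v u j))"])
qed

lemma valid_eig_orthonormal: "valid_eig eig \<Longrightarrow> symmetric_mat A \<Longrightarrow> orthonormal (snd (eig A))"
  by (simp add: valid_eig_def orthonormal_def)

lemma valid_eig_spectral: "valid_eig eig \<Longrightarrow> symmetric_mat A \<Longrightarrow> A = spectral (fst (eig A)) (snd (eig A))"
  by (simp add: valid_eig_def spectral_def)

section \<open>Positive definite matrices\<close>

text \<open>A valid eigendecomposition oracle \<open>eig\<close> serves as the spectral theorem below.\<close>

lemma matrix_inv_unique:
  fixes A B :: "real^'n::finite^'n"
  assumes "A ** B = mat 1" shows "matrix_inv A = B"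
proof -
  have BA: "B ** A = mat 1" using assms matrix_left_right_inverse by blast
  have ex: "\<exists>X. A ** X = mat 1 \<and> X ** A = mat 1" using assms BA by blast
  define X where "X = matrix_inv A"
  have X: "A ** X = mat 1 \<and> X ** A = mat 1"
    unfolding X_def matrix_inv_def using someI_ex[OF ex] .
  have "X = X ** (A ** B)" using assms by simp
  also have "\<dots> = B" using X by (simp add: matrix_mul_assoc)
  finally show ?thesis unfolding X_def .
qed

lemma matrix_inv_spectral:
  assumes "orthonormal u" "\<And>i. f i \<noteq> 0"
  shows "matrix_inv (spectral f u) = spectral (\<lambda>i. 1 / f i) u"
  by (rule matrix_inv_unique) (simp add: spectral_mult assms spectral_one)

lemma posdef_spectral:
  fixes u :: "'n::finite \<Rightarrow> real^'n"
  assumes "orthonormal u" "\<And>i. f i > 0"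
  shows "posdef (spectral f u)"
  unfolding posdef_def
proof (intro conjI allI impI)
  show "symmetric_mat (spectral f u)" by (rule symmetric_spectral)
  fix x :: "real^'n" assume "x \<noteq> 0"
  have "(\<Sum>i\<in>UNIV. (u i \<bullet> x)^2) = x \<bullet> x" by (rule sum_square_coordinates[OF assms(1)])
  also have "\<dots> > 0" using \<open>x \<noteq> 0\<close> by simp
  finally obtain i where i: "(u i \<bullet> x)^2 \<noteq> 0"
    by (metis (mono_tags, lifting) less_irrefl sum.neutral)
  have nn: "\<And>j. 0 \<le> f j * (u j \<bullet> x)^2" using assms(2) by (simp add: less_imp_le)
  have pi: "0 < f i * (u i \<bullet> x)^2" using i assms(2) by simp
  have "0 < (\<Sum>i\<in>UNIV. f i * (u i \<bullet> x)^2)"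
    using sum_pos2[of UNIV i "\<lambda>j. f j * (u j \<bullet> x)^2"] pi nn by simp
  thus "0 < x \<bullet> (spectral f u *v x)" by (simp add: quadratic_form_spectral)
qed

lemma posdef_eig:
  fixes eig :: "'n::finite eigfun"
  assumes "valid_eig eig" "posdef A"
  shows "orthonormal (snd (eig A)) \<and> (\<forall>i. fst (eig A) i > 0) \<and> A = spectral (fst (eig A)) (snd (eig A))"
proof -
  have sym: "symmetric_mat A" using assms(2) by (simp add: posdef_def)
  let ?u = "snd (eig A)" and ?m = "fst (eig A)"
  have o: "orthonormal ?u" by (rule valid_eig_orthonormal[OF assms(1) sym])
  have A: "A = spectral ?m ?u" by (rule valid_eig_spectral[OF assms(1) sym])
  have "\<forall>i. ?m i > 0"
  proof
    fix i
    have "?u i \<bullet> ?u i = 1" using o by (simp add: orthonormal_def)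
    hence "?u i \<noteq> 0" by auto
    hence "?u i \<bullet> (A *v ?u i) > 0" using assms(2) by (simp add: posdef_def)
    also have "?u i \<bullet> (A *v ?u i) = ?m i" by (subst A) (simp add: inner_spectral_basis[OF o])
    finally show "?m i > 0" .
  qed
  thus ?thesis using o A by blast
qed

lemma posdef_spectralE:
  fixes eig :: "'n::finite eigfun" and A :: "real^'n^'n"
  assumes "valid_eig eig" "posdef A"
  obtains m u where "orthonormal u" "\<And>i. m i > 0" "A = spectral m u"
  using posdef_eig[OF assms] by blast

lemma posdef_matrix_inv:
  fixes eig :: "'n::finite eigfun" and A :: "real^'n^'n"
  assumes "valid_eig eig" "posdef A" shows "posdef (matrix_inv A)"
proof -
  obtain m u where o: "orthonormal u" and m: "\<And>i. m i > 0" and A: "A = spectral m u"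
    using posdef_spectralE[OF assms] by blast
  have "m i \<noteq> 0" for i using m[of i] by simp
  thus ?thesis using o m A by (simp add: matrix_inv_spectral posdef_spectral)
qed

lemma matrix_inv_matrix_inv:
  fixes eig :: "'n::finite eigfun" and A :: "real^'n^'n"
  assumes "valid_eig eig" "posdef A" shows "matrix_inv (matrix_inv A) = A"
proof -
  obtain m u where o: "orthonormal u" and m: "\<And>i. m i > 0" and A: "A = spectral m u"
    using posdef_spectralE[OF assms] by blast
  have "m i \<noteq> 0" for i using m[of i] by simp
  thus ?thesis using o A by (simp add: matrix_inv_spectral)
qed

lemma matrix_mult_inv_right:
  fixes eig :: "'n::finite eigfun" and A :: "real^'n^'n"
  assumes "valid_eig eig" "posdef A" shows "A ** matrix_inv A = mat 1"
proof -
  obtain m u where o: "orthonormal u" and m: "\<And>i. m i > 0" and A: "A = spectral m u"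
    using posdef_spectralE[OF assms] by blast
  have "m i \<noteq> 0" for i using m[of i] by simp
  thus ?thesis using o A by (simp add: matrix_inv_spectral spectral_mult spectral_one)
qed

lemma matrix_mult_inv_left:
  fixes eig :: "'n::finite eigfun" and A :: "real^'n^'n"
  assumes "valid_eig eig" "posdef A" shows "matrix_inv A ** A = mat 1"
  using matrix_mult_inv_right[OF assms] matrix_left_right_inverse by blast

lemma det_pos_posdef:
  fixes eig :: "'n::finite eigfun" and A :: "real^'n^'n"
  assumes "valid_eig eig" "posdef A" shows "det A > 0"
proof -
  obtain m u where o: "orthonormal u" and m: "\<And>i. m i > 0" and A: "A = spectral m u"
    using posdef_spectralE[OF assms] by blast
  show ?thesis using o m A by (simp add: det_spectral prod_pos less_imp_le)
qed

lemma det_matrix_inv: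
  fixes eig :: "'n::finite eigfun" and A :: "real^'n^'n"
  assumes "valid_eig eig" "posdef A" shows "det (matrix_inv A) = 1 / det A"
proof -
  have "det A * det (matrix_inv A) = 1"
    using matrix_mult_inv_right[OF assms] det_mul[of A "matrix_inv A"] by simp
  thus ?thesis using det_pos_posdef[OF assms] by (simp add: field_simps)
qed

lemma posdef_transpose: "posdef A \<Longrightarrow> transpose A = A"
  by (simp add: posdef_def symmetric_mat_def)

lemma posdef_imp_psd: "posdef A \<Longrightarrow> psd A"
  unfolding posdef_def psd_def by (metis inner_zero_left less_le order_refl)

lemma posdef_congruence:
  fixes S Si Y :: "real^'n::finite^'n"
  assumes Y: "posdef Y" and S: "transpose S = S" and SiS: "Si ** S = mat 1"
  shows "posdef (S ** Y ** S)"
  unfolding posdef_def symmetric_mat_def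
proof (intro conjI allI impI)
  show "transpose (S ** Y ** S) = S ** Y ** S"
    by (simp add: matrix_transpose_mul S posdef_transpose[OF Y] matrix_mul_assoc)
  fix x :: "real^'n" assume "x \<noteq> 0"
  have "S *v x \<noteq> 0"
  proof
    assume "S *v x = 0"
    hence "Si *v (S *v x) = 0" by simp
    thus False using SiS \<open>x \<noteq> 0\<close> by (simp add: matrix_vector_mul_assoc)
  qed
  hence "0 < (S *v x) \<bullet> (Y *v (S *v x))" using Y by (simp add: posdef_def)
  also have "\<dots> = x \<bullet> ((S ** Y ** S) *v x)"
    using inner_transpose_matrix_vector[of x S "Y *v (S *v x)"]
    by (simp add: S matrix_vector_mul_assoc matrix_mul_assoc)
  finally show "0 < x \<bullet> ((S ** Y ** S) *v x)" .
qed

section \<open>The log-determinant divergence\<close>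

lemma logdet_div_eq:
  fixes X Y :: "real^'n::finite^'n" and eig :: "'n eigfun"
  assumes "valid_eig eig" "posdef X" "posdef Y"
  shows "logdet_div X Y = trace (matrix_inv Y ** X) - ln (det X) + ln (det Y) - real CARD('n)"
proof -
  have dX: "det X > 0" and dY: "det Y > 0" using det_pos_posdef assms by blast+
  have "det (matrix_inv Y ** X) = det X / det Y"
    by (simp add: det_mul det_matrix_inv[OF assms(1,3)])
  hence "ln (det (matrix_inv Y ** X)) = ln (det X) - ln (det Y)" using dX dY by (simp add: ln_div)
  thus ?thesis by (simp add: logdet_div_def)
qed

text \<open>Writing \<open>X = S S\<close> with \<open>S\<close> symmetric, \<open>M = S Y\<^sup>-\<^sup>1 S\<close> has the trace and the
  determinant of \<open>Y\<^sup>-\<^sup>1 X\<close>.\<close>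

lemma logdet_div_congruent:
  fixes eig :: "'n::finite eigfun" and X Y :: "real^'n^'n"
  assumes ev: "valid_eig eig" and X: "posdef X" and Y: "posdef Y"
  shows "\<exists>M :: real^'n^'n. posdef M \<and> logdet_div X Y = trace M - ln (det M) - real CARD('n)
    \<and> (M = mat 1 \<longrightarrow> X = Y)"
proof -
  obtain m u where o: "orthonormal u" and m: "\<And>i. m i > 0" and Xs: "X = spectral m u"
    using posdef_spectralE[OF ev X] by blast
  have m0: "\<And>i. m i \<noteq> 0" using m by (metis less_irrefl)
  define Yi where "Yi = matrix_inv Y"
  have Yi: "posdef Yi" unfolding Yi_def by (rule posdef_matrix_inv[OF ev Y])
  define S where "S = spectral (\<lambda>i. sqrt (m i)) u"
  define Si where "Si = spectral (\<lambda>i. 1 / sqrt (m i)) u"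
  have SS: "S ** S = X" using m by (simp add: S_def Xs spectral_mult[OF o] less_imp_le)
  have SiS: "Si ** S = mat 1"
    using m by (simp add: S_def Si_def spectral_mult[OF o] spectral_one[OF o] m0)
  hence SSi: "S ** Si = mat 1" using matrix_left_right_inverse by blast
  have SiSi: "Si ** Si = matrix_inv X"
    using m m0 by (simp add: Si_def Xs spectral_mult[OF o] matrix_inv_spectral[OF o] less_imp_le)
  define M where "M = S ** Yi ** S"
  have tS: "transpose S = S" by (simp add: S_def transpose_spectral)
  have Mpd: "posdef M" unfolding M_def by (rule posdef_congruence[OF Yi tS SiS])
  have "trace M = trace (S ** (Yi ** S))" by (simp add: M_def matrix_mul_assoc)
  also have "\<dots> = trace ((Yi ** S) ** S)" by (rule trace_mul_sym)
  finally have "trace M = trace (Yi ** X)" using SS by (metis matrix_mul_assoc)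
  moreover have "det M = det (Yi ** X)" by (simp add: M_def det_mul SS[symmetric])
  ultimately have "logdet_div X Y = trace M - ln (det M) - real CARD('n)"
    by (simp add: logdet_div_def Yi_def)
  moreover have "X = Y" if "M = mat 1"
  proof -
    have "Yi = (Si ** S) ** Yi ** (S ** Si)" by (simp add: SiS SSi)
    also have "\<dots> = Si ** M ** Si" by (simp add: M_def matrix_mul_assoc)
    finally have "matrix_inv Y = matrix_inv X" using that SiSi by (simp add: Yi_def)
    hence "matrix_inv (matrix_inv Y) = matrix_inv (matrix_inv X)" by simp
    thus "X = Y" using matrix_inv_matrix_inv[OF ev X] matrix_inv_matrix_inv[OF ev Y] by simp
  qed
  ultimately show ?thesis using Mpd by blast
qed

lemma posdef_trace_minus_ln_det:
  fixes eig :: "'n::finite eigfun" and M :: "real^'n^'n"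
  assumes ev: "valid_eig eig" and M: "posdef M"
  shows "0 \<le> trace M - ln (det M) - real CARD('n)"
    and "trace M - ln (det M) - real CARD('n) \<le> 0 \<Longrightarrow> M = mat 1"
proof -
  obtain k z where oz: "orthonormal z" and k: "\<And>i. k i > 0" and Ms: "M = spectral k z"
    using posdef_spectralE[OF ev M] by blast
  have k0: "\<And>i. k i \<noteq> 0" using k by (metis less_irrefl)
  have "ln (det M) = (\<Sum>i\<in>UNIV. ln (k i))"
    using k0 ln_prod[of UNIV k] by (simp add: Ms det_spectral[OF oz] less_imp_le)
  hence eq: "trace M - ln (det M) - real CARD('n) = (\<Sum>i\<in>UNIV. k i - ln (k i) - 1)"
    by (simp add: Ms trace_spectral[OF oz] sum_subtractf)
  have nn: "\<And>i. 0 \<le> k i - ln (k i) - 1" using ln_le_minus_one[OF k] by (simp add: algebra_simps)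
  have s0: "0 \<le> (\<Sum>i\<in>UNIV. k i - ln (k i) - 1)" by (rule sum_nonneg) (rule nn)
  thus "0 \<le> trace M - ln (det M) - real CARD('n)" unfolding eq .
  assume "trace M - ln (det M) - real CARD('n) \<le> 0"
  hence "(\<Sum>i\<in>UNIV. k i - ln (k i) - 1) = 0" using eq s0 by linarith
  hence "\<forall>i\<in>UNIV. k i - ln (k i) - 1 = 0"
    by (rule sum_nonneg_eq_0_iff[THEN iffD1, rotated 2]) (use nn in auto)
  hence z: "k i - ln (k i) - 1 = 0" for i by blast
  have "k i = 1" for i by (rule ln_eq_minus_one[OF k]) (use z[of i] in linarith)
  hence "k = (\<lambda>_. 1)" by auto
  thus "M = mat 1" by (simp add: Ms spectral_one[OF oz])
qed

lemma logdet_div_nonneg: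
  fixes eig :: "'n::finite eigfun" and X Y :: "real^'n^'n"
  assumes "valid_eig eig" "posdef X" "posdef Y"
  shows "0 \<le> logdet_div X Y"
proof -
  obtain M :: "real^'n^'n" where M: "posdef M" and "logdet_div X Y = trace M - ln (det M) - real CARD('n)"
    and "M = mat 1 \<longrightarrow> X = Y"
    using logdet_div_congruent[OF assms] by blast
  thus ?thesis using posdef_trace_minus_ln_det(1)[OF assms(1) M] by simp
qed

lemma logdet_div_le_0_imp_eq:
  fixes eig :: "'n::finite eigfun" and X Y :: "real^'n^'n"
  assumes "valid_eig eig" "posdef X" "posdef Y" "logdet_div X Y \<le> 0"
  shows "X = Y"
proof -
  obtain M :: "real^'n^'n" where M: "posdef M" and "logdet_div X Y = trace M - ln (det M) - real CARD('n)"
    and "M = mat 1 \<longrightarrow> X = Y"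
    using logdet_div_congruent[OF assms(1-3)] by blast
  thus ?thesis using posdef_trace_minus_ln_det(2)[OF assms(1) M] assms(4) by simp
qed

text \<open>The shift \<open>c\<close> is the Lagrange multiplier of the trace constraint in the projection.\<close>

lemma exists_trace_normalising_shift:
  fixes a :: "'n::finite \<Rightarrow> real"
  assumes a: "\<And>i. a i > 0"
  shows "\<exists>c. (\<forall>i. a i + c > 0) \<and> (\<Sum>i\<in>UNIV. 1 / (a i + c)) = 1"
proof -
  define f where "f = (\<lambda>x::real. \<Sum>i\<in>UNIV. 1 / (a i + x))"
  obtain k where k: "\<And>i. a k \<le> a i"
  proof -
    have "Min (range a) \<in> range a" by (rule Min_in) auto
    then obtain k where "a k = Min (range a)" by (metis rangeE)
    thus ?thesis using that by (metis Min_le finite rangeI finite_imageI)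
  qed
  define l0 where "l0 = 1/2 - a k"
  define l1 where "l1 = real CARD('n)"
  have cpos: "CARD('n) > 0" by simp
  have pos0: "a i + x > 0" if "l0 \<le> x" for i x using k[of i] that unfolding l0_def by linarith
  have "\<exists>x. l0 \<le> x \<and> x \<le> l1 \<and> f x = 1"
  proof (rule IVT2)
    have l1p: "l1 > 0" using cpos by (simp add: l1_def)
    have "1 / (a i + l1) \<le> 1 / l1" for i
      by (rule divide_left_mono) (use a[of i] l1p in auto)
    hence "f l1 \<le> (\<Sum>i\<in>(UNIV::'n set). 1 / l1)"
      unfolding f_def by (intro sum_mono) auto
    also have "\<dots> = 1" using cpos by (simp add: l1_def)
    finally show "f l1 \<le> 1" .
    have "1 \<le> 1 / (a k + l0)" by (simp add: l0_def)
    also have "\<dots> \<le> f l0" unfolding f_def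
      by (rule member_le_sum) (use pos0 in \<open>auto intro: less_imp_le\<close>)
    finally show "1 \<le> f l0" .
    have "real CARD('n) \<ge> 1" using cpos by linarith
    thus "l0 \<le> l1" unfolding l0_def l1_def using a[of k] by linarith
    show "\<forall>x. l0 \<le> x \<and> x \<le> l1 \<longrightarrow> isCont f x"
    proof (intro allI impI)
      fix x assume "l0 \<le> x \<and> x \<le> l1"
      hence nz: "\<And>i. a i + x \<noteq> 0" using pos0 by (metis less_irrefl)
      show "isCont f x" unfolding f_def by (intro continuous_intros) (use nz in auto)
    qed
  qed
  then obtain c where c0: "l0 \<le> c" and fc: "f c = 1" by blast
  have "\<forall>i. a i + c > 0" using pos0[OF c0] by blast
  thus ?thesis using fc unfolding f_def by blast
qed

lemma logdet_div_inverse_shift: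
  fixes eig :: "'n::finite eigfun" and U W V :: "real^'n^'n"
  assumes ev: "valid_eig eig" and U: "posdef U" and W: "posdef W"
    and WU: "matrix_inv W = matrix_inv U + c *\<^sub>R mat 1" and V: "posdef V" "trace V = 1"
  shows "logdet_div V U = logdet_div V W + (ln (det U) - ln (det W) - c)"
proof -
  have "matrix_inv W ** V = matrix_inv U ** V + c *\<^sub>R V"
    by (simp add: WU matrix_add_rdistrib flip: scalar_matrix_assoc)
  hence "trace (matrix_inv W ** V) = trace (matrix_inv U ** V) + c"
    using V(2) by (simp add: trace_add trace_scaleR)
  thus ?thesis using logdet_div_eq[OF ev V(1) U] logdet_div_eq[OF ev V(1) W] by simp
qed

text \<open>In fact \<open>D(V, U) = D(V, proj U) + D(proj U, U)\<close> for every positive definite density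
  matrix \<open>V\<close>.\<close>

lemma proj_pythagorean:
  fixes eig :: "'n::finite eigfun" and U :: "real^'n^'n"
  assumes ev: "valid_eig eig" and U: "posdef U"
  shows "density (proj U) \<and> posdef (proj U) \<and>
         (\<forall>V. density V \<and> posdef V \<longrightarrow> logdet_div V (proj U) \<le> logdet_div V U)"
proof -
  obtain a z where oz: "orthonormal z" and a: "\<And>i. a i > 0" and Ui: "matrix_inv U = spectral a z"
    using posdef_spectralE[OF ev posdef_matrix_inv[OF ev U]] by blast
  obtain c where ac: "\<And>i. a i + c > 0" and sum1: "(\<Sum>i\<in>UNIV. 1 / (a i + c)) = 1"
    using exists_trace_normalising_shift[of a, OF a] by blast
  have ac0: "\<And>i. a i + c \<noteq> 0" using ac by (metis less_irrefl)
  define W where "W = spectral (\<lambda>i. 1 / (a i + c)) z"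
  have Wpd: "posdef W" unfolding W_def by (rule posdef_spectral[OF oz]) (use ac in simp)
  have Wden: "density W"
    using Wpd posdef_imp_psd sum1 by (simp add: density_def W_def trace_spectral[OF oz])
  have "matrix_inv W = spectral (\<lambda>i. a i + c) z"
    using ac0 by (simp add: W_def matrix_inv_spectral[OF oz])
  also have "\<dots> = matrix_inv U + c *\<^sub>R mat 1"
    by (simp add: Ui spectral_one[OF oz, symmetric] scaleR_spectral spectral_add)
  finally have WU: "matrix_inv W = matrix_inv U + c *\<^sub>R mat 1" .
  define K where "K = ln (det U) - ln (det W) - c"
  have shift: "logdet_div V U = logdet_div V W + K" if "density V" "posdef V" for V :: "real^'n^'n"
    using logdet_div_inverse_shift[OF ev U Wpd WU that(2)] that(1) by (simp add: density_def K_def)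
  have "logdet_div W W = 0"
    using logdet_div_eq[OF ev Wpd Wpd] by (simp add: matrix_mult_inv_left[OF ev Wpd] trace_I)
  hence pyth: "logdet_div V U = logdet_div V W + logdet_div W U" if "density V" "posdef V" for V :: "real^'n^'n"
    using shift[OF that] shift[OF Wden Wpd] by simp
  have Wmin: "density W \<and> posdef W \<and> (\<forall>V. density V \<and> posdef V \<longrightarrow> logdet_div W U \<le> logdet_div V U)"
  proof (intro conjI allI impI Wden Wpd)
    fix V :: "real^'n^'n" assume V: "density V \<and> posdef V"
    hence "logdet_div V U = logdet_div V W + logdet_div W U" using pyth by blast
    thus "logdet_div W U \<le> logdet_div V U" using V logdet_div_nonneg[OF ev _ Wpd, of V] by linarith
  qed
  define P where "P = proj U"
  have P: "density P \<and> posdef P \<and> (\<forall>V. density V \<and> posdef V \<longrightarrow> logdet_div P U \<le> logdet_div V U)"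
    unfolding P_def proj_def by (rule someI[of _ W]) (rule Wmin)
  hence "logdet_div P U \<le> logdet_div W U" and "logdet_div P U = logdet_div P W + logdet_div W U"
    using Wden Wpd pyth[of P] by auto
  hence "logdet_div P W \<le> 0" by linarith
  hence "P = W" using logdet_div_le_0_imp_eq[OF ev _ Wpd] P by blast
  moreover have "logdet_div V W \<le> logdet_div V U" if "density V" "posdef V" for V :: "real^'n^'n"
    using pyth[OF that] logdet_div_nonneg[OF ev Wpd U] by simp
  ultimately show ?thesis using P unfolding P_def by blast
qed

lemma mirror_descent_step:
  fixes eig :: "'n::finite eigfun" and W :: "real^'n^'n"
  assumes ev: "valid_eig eig" and W: "posdef W" and A: "posdef (matrix_inv W + \<eta> *\<^sub>R Lt)"
    and U: "posdef U" "density U"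
  shows "\<eta> * frob (W - U) Lt \<le> logdet_div U W - logdet_div U (proj (Wtil \<eta> W Lt))
           + \<eta> * frob (W - Wtil \<eta> W Lt) Lt"
proof -
  define Am where "Am = matrix_inv W + \<eta> *\<^sub>R Lt"
  define Wn where "Wn = matrix_inv Am"
  have Wn_eq: "Wtil \<eta> W Lt = Wn" by (simp add: Wtil_def Wn_def Am_def)
  have Wn: "posdef Wn" unfolding Wn_def Am_def by (rule posdef_matrix_inv[OF ev A])
  have iWn: "matrix_inv Wn = Am" unfolding Wn_def Am_def by (rule matrix_inv_matrix_inv[OF ev A])
  have Wi: "matrix_inv W = Am - \<eta> *\<^sub>R Lt" by (simp add: Am_def)
  have AWn: "Am ** Wn = mat 1" unfolding Wn_def Am_def by (rule matrix_mult_inv_right[OF ev A])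
  have fU: "frob U Lt = trace (Lt ** U)"
    by (simp add: frob_symmetric_eq_trace[OF posdef_transpose[OF U(1)]]) (rule trace_mul_sym)
  have fWn: "frob Wn Lt = trace (Lt ** Wn)"
    by (simp add: frob_symmetric_eq_trace[OF posdef_transpose[OF Wn]]) (rule trace_mul_sym)
  have D1: "logdet_div U W = trace (matrix_inv W ** U) - ln (det U) + ln (det W) - real CARD('n)"
    by (rule logdet_div_eq[OF ev U(1) W])
  have D2: "logdet_div U Wn = trace (matrix_inv W ** U) + \<eta> * frob U Lt - ln (det U) + ln (det Wn) - real CARD('n)"
    using logdet_div_eq[OF ev U(1) Wn]
    by (simp add: iWn Am_def matrix_add_rdistrib scalar_matrix_assoc[symmetric] trace_add trace_scaleR fU)
  have D3: "logdet_div Wn W = real CARD('n) - \<eta> * frob Wn Lt - ln (det Wn) + ln (det W) - real CARD('n)"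
    using logdet_div_eq[OF ev Wn W]
    by (simp add: Wi matrix_diff_rdistrib scalar_matrix_assoc[symmetric] trace_sub trace_scaleR
        fWn AWn trace_I)
  have "0 \<le> logdet_div Wn W" by (rule logdet_div_nonneg[OF ev Wn W])
  moreover have "logdet_div U (proj Wn) \<le> logdet_div U Wn"
    using proj_pythagorean[OF ev Wn] U by blast
  ultimately show ?thesis unfolding Wn_eq frob_diff_left right_diff_distrib using D1 D2 D3
    by linarith
qed

section \<open>The distribution of trajectories\<close>

lemma finite_set_pmf_samp: "finite (set_pmf (samp mode \<gamma> eig W L))"
  by (cases mode) (auto simp: samp_def Let_def set_bind_pmf intro!: finite_UN_I)

lemma length_traj: "h \<in> set_pmf (traj mode \<gamma> \<eta> eig env k) \<Longrightarrow> length h = k"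
  by (induction k arbitrary: h) (auto simp: set_bind_pmf)

lemma finite_set_pmf_traj: "finite (set_pmf (traj mode \<gamma> \<eta> eig env k))"
  by (induction k) (auto simp: set_bind_pmf finite_set_pmf_samp intro!: finite_UN_I)

lemma map_pmf_take_traj:
  "t \<le> T \<Longrightarrow> map_pmf (take t) (traj mode \<gamma> \<eta> eig env T) = traj mode \<gamma> \<eta> eig env t"
proof (induction T arbitrary: t)
  case 0 thus ?case by simp
next
  case (Suc T)
  show ?case
  proof (cases "t = Suc T")
    case True
    have "map_pmf (take t) (traj mode \<gamma> \<eta> eig env (Suc T)) = map_pmf id (traj mode \<gamma> \<eta> eig env (Suc T))"
      by (rule map_pmf_cong) (auto simp: True dest: length_traj)
    thus ?thesis using True by simp
  next
    case False
    hence tT: "t \<le> T" using Suc.prems by simp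
    have "map_pmf (take t) (traj mode \<gamma> \<eta> eig env (Suc T)) =
          traj mode \<gamma> \<eta> eig env T \<bind> (\<lambda>h. return_pmf (take t h))"
      unfolding traj.simps map_bind_pmf
    proof (rule bind_pmf_cong[OF refl])
      fix h assume "h \<in> set_pmf (traj mode \<gamma> \<eta> eig env T)"
      hence "length h = T" by (rule length_traj)
      hence "map_pmf (take t) (map_pmf (\<lambda>(w, Lt). h @ [(env h, w, Lt)]) (samp mode \<gamma> eig (Wfrom \<eta> W1 h) (env h)))
            = map_pmf (\<lambda>_. take t h) (samp mode \<gamma> eig (Wfrom \<eta> W1 h) (env h))"
        using tT by (simp add: pmf.map_comp o_def case_prod_beta)
      thus "map_pmf (take t) (map_pmf (\<lambda>(w, Lt). h @ [(env h, w, Lt)]) (samp mode \<gamma> eig (Wfrom \<eta> W1 h) (env h)))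
            = return_pmf (take t h)" by simp
    qed
    also have "\<dots> = map_pmf (take t) (traj mode \<gamma> \<eta> eig env T)" by (simp add: map_pmf_def)
    also have "\<dots> = traj mode \<gamma> \<eta> eig env t" by (rule Suc.IH[OF tT])
    finally show ?thesis .
  qed
qed

lemma set_pmf_traj_take:
  assumes "t \<le> T" "h' \<in> set_pmf (traj mode \<gamma> \<eta> eig env t)"
  shows "\<exists>h\<in>set_pmf (traj mode \<gamma> \<eta> eig env T). h' = take t h"
proof -
  have "h' \<in> set_pmf (map_pmf (take t) (traj mode \<gamma> \<eta> eig env T))"
    using assms map_pmf_take_traj by metis
  thus ?thesis by auto
qed

lemma expectation_finite_eq_sum:
  "finite (set_pmf p) \<Longrightarrow> measure_pmf.expectation p (f::_\<Rightarrow>real) = (\<Sum>a\<in>set_pmf p. f a * pmf p a)"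
  by (rule integral_measure_pmf_real) auto

lemma expectation_affine:
  assumes "finite (set_pmf p)"
  shows "measure_pmf.expectation p (\<lambda>x. a * f x + b) = a * measure_pmf.expectation p f + (b::real)"
proof -
  have s1: "(\<Sum>x\<in>set_pmf p. pmf p x) = 1" by (rule sum_pmf_eq_1[OF assms]) auto
  have "measure_pmf.expectation p (\<lambda>x. a * f x + b) = (\<Sum>x\<in>set_pmf p. (a * f x + b) * pmf p x)"
    by (rule expectation_finite_eq_sum[OF assms])
  also have "\<dots> = a * (\<Sum>x\<in>set_pmf p. f x * pmf p x) + b * (\<Sum>x\<in>set_pmf p. pmf p x)"
    by (simp add: algebra_simps sum.distrib sum_distrib_left)
  also have "\<dots> = a * measure_pmf.expectation p f + b"
    by (simp add: expectation_finite_eq_sum[OF assms, symmetric] s1)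
  finally show ?thesis .
qed

lemma expectation_mono:
  assumes "finite (set_pmf p)" "\<And>x. x \<in> set_pmf p \<Longrightarrow> f x \<le> (g x::real)"
  shows "measure_pmf.expectation p f \<le> measure_pmf.expectation p g"
  unfolding expectation_finite_eq_sum[OF assms(1)]
  by (rule sum_mono) (use assms(2) in \<open>auto intro: mult_right_mono\<close>)

lemma expectation_sum:
  assumes "finite (set_pmf p)"
  shows "measure_pmf.expectation p (\<lambda>x. \<Sum>t\<in>S. f t x) = (\<Sum>t\<in>S. measure_pmf.expectation p (f t) :: real)"
  unfolding expectation_finite_eq_sum[OF assms(1)]
  by (simp add: sum_distrib_right) (rule sum.swap)

lemma expectation_traj_take: "t \<le> T \<Longrightarrow>
  measure_pmf.expectation (traj mode \<gamma> \<eta> eig env T) (\<lambda>h. f (take t h)) =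
  measure_pmf.expectation (traj mode \<gamma> \<eta> eig env t) (f :: _ \<Rightarrow> real)"
  by (subst map_pmf_take_traj[symmetric], assumption) simp

lemma expectation_traj_Suc:
  "measure_pmf.expectation (traj mode \<gamma> \<eta> eig env (Suc t)) (f :: _ \<Rightarrow> real) =
   measure_pmf.expectation (traj mode \<gamma> \<eta> eig env t)
     (\<lambda>h. measure_pmf.expectation (samp mode \<gamma> eig (Wfrom \<eta> W1 h) (env h))
        (\<lambda>(w, Lt). f (h @ [(env h, w, Lt)])))"
proof -
  let ?p = "traj mode \<gamma> \<eta> eig env t"
  let ?g = "\<lambda>h. map_pmf (\<lambda>(w, Lt). h @ [(env h, w, Lt)]) (samp mode \<gamma> eig (Wfrom \<eta> W1 h) (env h))"
  have "measure_pmf.expectation (traj mode \<gamma> \<eta> eig env (Suc t)) f =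
        (\<Sum>a\<in>set_pmf ?p. pmf ?p a *\<^sub>R measure_pmf.expectation (?g a) f)"
    unfolding traj.simps
      by (rule pmf_expectation_bind) (auto simp: finite_set_pmf_traj finite_set_pmf_samp)
  also have "\<dots> = (\<Sum>a\<in>set_pmf ?p. measure_pmf.expectation (samp mode \<gamma> eig (Wfrom \<eta> W1 a) (env a))
        (\<lambda>(w, Lt). f (a @ [(env a, w, Lt)])) * pmf ?p a)"
    by (simp add: mult.commute case_prod_unfold)
  also have "\<dots> = measure_pmf.expectation ?p (\<lambda>h. measure_pmf.expectation (samp mode \<gamma> eig (Wfrom \<eta> W1 h) (env h))
        (\<lambda>(w, Lt). f (h @ [(env h, w, Lt)])))"
    by (rule expectation_finite_eq_sum[symmetric]) (rule finite_set_pmf_traj)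
  finally show ?thesis .
qed

lemma expectation_traj_round:
  fixes F :: "_ \<Rightarrow> _ \<Rightarrow> _ \<Rightarrow> _ \<Rightarrow> real"
  assumes "t < T"
  shows "measure_pmf.expectation (traj mode \<gamma> \<eta> eig env T) (\<lambda>h. F (take t h) (Lh h t) (wh h t) (Lth h t)) =
   measure_pmf.expectation (traj mode \<gamma> \<eta> eig env t)
     (\<lambda>h. measure_pmf.expectation (samp mode \<gamma> eig (Wfrom \<eta> W1 h) (env h))
        (\<lambda>(w, Lt). F h (env h) w Lt))"
proof -
  define G where "G = (\<lambda>h. F (take t h) (Lh h t) (wh h t) (Lth h t) :: real)"
  have "measure_pmf.expectation (traj mode \<gamma> \<eta> eig env T) G =
        measure_pmf.expectation (traj mode \<gamma> \<eta> eig env T) (\<lambda>h. G (take (Suc t) h))"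
  proof (rule integral_cong_AE)
    show "AE h in measure_pmf (traj mode \<gamma> \<eta> eig env T). G h = G (take (Suc t) h)"
    proof (rule AE_pmfI)
      fix h assume "h \<in> set_pmf (traj mode \<gamma> \<eta> eig env T)"
      hence "length h = T" by (rule length_traj)
      thus "G h = G (take (Suc t) h)" using assms by (simp add: G_def Lh_def wh_def Lth_def)
    qed
  qed auto
  also have "\<dots> = measure_pmf.expectation (traj mode \<gamma> \<eta> eig env (Suc t)) G"
    using assms by (intro expectation_traj_take) simp
  also have "\<dots> = measure_pmf.expectation (traj mode \<gamma> \<eta> eig env t)
     (\<lambda>h. measure_pmf.expectation (samp mode \<gamma> eig (Wfrom \<eta> W1 h) (env h))
        (\<lambda>(w, Lt). G (h @ [(env h, w, Lt)])))" by (rule expectation_traj_Suc)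
  also have "\<dots> = measure_pmf.expectation (traj mode \<gamma> \<eta> eig env t)
     (\<lambda>h. measure_pmf.expectation (samp mode \<gamma> eig (Wfrom \<eta> W1 h) (env h))
        (\<lambda>(w, Lt). F h (env h) w Lt))"
  proof (rule integral_cong_AE)
    show "AE h in measure_pmf (traj mode \<gamma> \<eta> eig env t).
       measure_pmf.expectation (samp mode \<gamma> eig (Wfrom \<eta> W1 h) (env h)) (\<lambda>(w, Lt). G (h @ [(env h, w, Lt)])) =
       measure_pmf.expectation (samp mode \<gamma> eig (Wfrom \<eta> W1 h) (env h)) (\<lambda>(w, Lt). F h (env h) w Lt)"
    proof (rule AE_pmfI)
      fix h assume "h \<in> set_pmf (traj mode \<gamma> \<eta> eig env t)"
      hence "length h = t" by (rule length_traj)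
      thus "measure_pmf.expectation (samp mode \<gamma> eig (Wfrom \<eta> W1 h) (env h)) (\<lambda>(w, Lt). G (h @ [(env h, w, Lt)])) =
       measure_pmf.expectation (samp mode \<gamma> eig (Wfrom \<eta> W1 h) (env h)) (\<lambda>(w, Lt). F h (env h) w Lt)"
        by (simp add: G_def Lh_def wh_def Lth_def nth_append)
    qed
  qed auto
  finally show ?thesis unfolding G_def .
qed

lemma Wfrom_snoc: "Wfrom \<eta> W (xs @ [(L, w, Lt)]) = proj (Wtil \<eta> (Wfrom \<eta> W xs) Lt)"
  by (induction \<eta> W xs rule: Wfrom.induct) auto

lemma Wt_Suc: "t < length h \<Longrightarrow> Wt \<eta> h (Suc t) = proj (Wtil \<eta> (Wt \<eta> h t) (Lth h t))"
  by (cases "h ! t") (simp add: Wt_def take_Suc_conv_app_nth Wfrom_snoc Lth_def)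

lemma posdef_density_W1: "posdef (W1 :: real^'n::finite^'n) \<and> density (W1 :: real^'n^'n)"
proof -
  have t: "transpose (W1 :: real^'n^'n) = W1"
    by (simp add: W1_def vec_eq_iff transpose_def mat_def)
  have q: "x \<bullet> (W1 *v x) = (1 / real CARD('n)) * (x \<bullet> x)" for x :: "real^'n"
    by (simp add: W1_def scaleR_matrix_vector_mult)
  have tr: "trace (W1 :: real^'n^'n) = 1" by (simp add: W1_def trace_scaleR trace_I)
  show ?thesis
    unfolding posdef_def density_def psd_def symmetric_mat_def using t q tr by auto
qed

lemma matrix_inv_W1: "matrix_inv (W1 :: real^'n::finite^'n) = real CARD('n) *\<^sub>R mat 1"
  by (rule matrix_inv_unique) (simp add: W1_def scalar_matrix_assoc[symmetric] matrix_scalar_ac)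

lemma det_W1: "det (W1 :: real^'n::finite^'n) = (1 / real CARD('n)) ^ CARD('n)"
  by (subst det_diagonal) (auto simp: W1_def mat_def)

lemma Wt_posdef_density:
  fixes eig :: "'n::finite eigfun"
  assumes ev: "valid_eig eig"
    and pd: "\<forall>h\<in>set_pmf (traj mode \<gamma> \<eta> eig env T). \<forall>t<T. posdef (matrix_inv (Wt \<eta> h t) + \<eta> *\<^sub>R Lth h t)"
    and h: "h \<in> set_pmf (traj mode \<gamma> \<eta> eig env T)"
  shows "t \<le> T \<Longrightarrow> posdef (Wt \<eta> h t) \<and> density (Wt \<eta> h t)"
proof (induction t)
  case 0 thus ?case using posdef_density_W1 by (simp add: Wt_def)
next
  case (Suc t)
  have len: "length h = T" using h by (rule length_traj)
  have A: "posdef (matrix_inv (Wt \<eta> h t) + \<eta> *\<^sub>R Lth h t)" using pd h Suc.prems by simp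
  have P: "posdef (Wtil \<eta> (Wt \<eta> h t) (Lth h t))" unfolding Wtil_def
    by (rule posdef_matrix_inv[OF ev A])
  have "Wt \<eta> h (Suc t) = proj (Wtil \<eta> (Wt \<eta> h t) (Lth h t))"
    using Wt_Suc[of t h \<eta>] len Suc.prems by simp
  thus ?case using proj_pythagorean[OF ev P] by simp
qed

section \<open>Unbiasedness of the two sampling schemes\<close>

lemma pmf_embed_pmf_finite:
  fixes p :: "'a::finite \<Rightarrow> real"
  assumes "\<And>i. 0 \<le> p i" "(\<Sum>i\<in>UNIV. p i) = 1"
  shows "pmf (embed_pmf p) x = p x"
proof -
  have "(\<integral>\<^sup>+x. ennreal (p x) \<partial>count_space UNIV) = 1"
    using assms by (simp add: nn_integral_count_space_finite sum_ennreal)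
  thus ?thesis using pmf_embed_pmf[of p] assms by simp
qed

lemma expectation_bind_embed_pmf:
  fixes p :: "'a::finite \<Rightarrow> real" and G :: "'a \<Rightarrow> 'b pmf"
  assumes "\<And>i. 0 \<le> p i" "(\<Sum>i\<in>UNIV. p i) = 1" "\<And>i. finite (set_pmf (G i))"
  shows "measure_pmf.expectation (bind_pmf (embed_pmf p) G) (\<phi>::'b \<Rightarrow> real) =
         (\<Sum>i\<in>UNIV. p i * measure_pmf.expectation (G i) \<phi>)"
  by (subst pmf_expectation_bind[of UNIV]) (use assms in \<open>auto simp: pmf_embed_pmf_finite\<close>)

lemma expectation_bind_uniform:
  "measure_pmf.expectation (bind_pmf (pmf_of_set (UNIV::'a::finite set)) (\<lambda>s. return_pmf (G s))) (\<phi>::_ \<Rightarrow> real) =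
   (\<Sum>s\<in>UNIV. \<phi> (G s)) / real (card (UNIV::'a set))"
  by (subst pmf_expectation_bind_pmf_of_set) (simp_all add: sum_divide_distrib divide_inverse_commute sum_distrib_left)

lemma expectation_sparse_scheme:
  fixes p :: "'a::finite \<Rightarrow> real"
  assumes "\<And>i. 0 \<le> p i" "(\<Sum>i\<in>UNIV. p i) = 1"
  shows "measure_pmf.expectation (bind_pmf (embed_pmf p) (\<lambda>I. bind_pmf (embed_pmf p) (\<lambda>J.
            bind_pmf (pmf_of_set UNIV) (\<lambda>s. return_pmf (G I J s))))) (\<phi> :: _ \<Rightarrow> real)
       = (\<Sum>I\<in>UNIV. \<Sum>J\<in>UNIV. p I * p J * ((\<phi> (G I J True) + \<phi> (G I J False)) / 2))"
proof -
  have fin: "finite (set_pmf (bind_pmf (embed_pmf p) (\<lambda>J. bind_pmf (pmf_of_set UNIV) (\<lambda>s. return_pmf (G I J s)))))" for I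
    by (auto simp: set_bind_pmf)
  have fin2: "finite (set_pmf (bind_pmf (pmf_of_set UNIV) (\<lambda>s. return_pmf (G I J s))))" for I J
    by (auto simp: set_bind_pmf)
  have UNIVb: "(UNIV :: bool set) = {True, False}" by auto
  show ?thesis
    apply (subst expectation_bind_embed_pmf[OF assms fin])
    apply (subst expectation_bind_embed_pmf[OF assms fin2])
    apply (subst expectation_bind_uniform)
    apply (simp add: sum_distrib_left UNIVb algebra_simps add_divide_distrib)
    done
qed

lemma expectation_dense_scheme:
  fixes p :: "'a::finite \<Rightarrow> real"
  assumes "\<And>i. 0 \<le> p i" "(\<Sum>i\<in>UNIV. p i) = 1"
  shows "measure_pmf.expectation (bind_pmf (bernoulli_pmf (1/2)) (\<lambda>B. if B then
            bind_pmf (embed_pmf p) (\<lambda>I. return_pmf (G1 I))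
          else bind_pmf (pmf_of_set (UNIV :: ('a \<Rightarrow> bool) set)) (\<lambda>s. return_pmf (G0 s)))) (\<phi> :: _ \<Rightarrow> real)
       = (\<Sum>I\<in>UNIV. p I * \<phi> (G1 I)) / 2 + (\<Sum>s\<in>UNIV. \<phi> (G0 s)) / real (card (UNIV :: ('a \<Rightarrow> bool) set)) / 2"
proof -
  have fin: "finite (set_pmf (if B then bind_pmf (embed_pmf p) (\<lambda>I. return_pmf (G1 I))
          else bind_pmf (pmf_of_set (UNIV :: ('a \<Rightarrow> bool) set)) (\<lambda>s. return_pmf (G0 s))))" for B
    by (auto simp: set_bind_pmf)
  have UNIVb: "(UNIV :: bool set) = {True, False}" by auto
  have "measure_pmf.expectation (bind_pmf (bernoulli_pmf (1/2)) (\<lambda>B. if B then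
            bind_pmf (embed_pmf p) (\<lambda>I. return_pmf (G1 I))
          else bind_pmf (pmf_of_set (UNIV :: ('a \<Rightarrow> bool) set)) (\<lambda>s. return_pmf (G0 s)))) \<phi> =
        (\<Sum>B\<in>UNIV. pmf (bernoulli_pmf (1/2)) B *\<^sub>R measure_pmf.expectation (if B then
            bind_pmf (embed_pmf p) (\<lambda>I. return_pmf (G1 I))
          else bind_pmf (pmf_of_set (UNIV :: ('a \<Rightarrow> bool) set)) (\<lambda>s. return_pmf (G0 s))) \<phi>)"
    by (rule pmf_expectation_bind) (use fin in auto)
  also have "\<dots> = (\<Sum>I\<in>UNIV. p I * \<phi> (G1 I)) / 2 + (\<Sum>s\<in>UNIV. \<phi> (G0 s)) / real (card (UNIV :: ('a \<Rightarrow> bool) set)) / 2"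
    by (simp add: UNIVb expectation_bind_embed_pmf[OF assms] expectation_bind_uniform)
  finally show ?thesis .
qed

definition sparse_outcome ::
    "('n::finite \<Rightarrow> real^'n) \<Rightarrow> real^'n^'n \<Rightarrow> ('n \<Rightarrow> real) \<Rightarrow> 'n \<Rightarrow> 'n \<Rightarrow> bool
      \<Rightarrow> (real^'n) \<times> (real^'n^'n)" where
  "sparse_outcome u L lam I J s =
    (if I = J then (u I, ((u I \<bullet> (L *v u I)) / (lam I)^2) *\<^sub>R outer (u I) (u I))
    else (let w = (1 / sqrt 2) *\<^sub>R (u I + sgn_of s *\<^sub>R u J)
      in (w, (sgn_of s * (w \<bullet> (L *v w)) / (2 * lam I * lam J)) *\<^sub>R (outer (u I) (u J) + outer (u J) (u I)))))"

definition dense_basis_outcome ::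
    "('n::finite \<Rightarrow> real^'n) \<Rightarrow> real^'n^'n \<Rightarrow> real^'n^'n \<Rightarrow> 'n \<Rightarrow> (real^'n) \<times> (real^'n^'n)" where
  "dense_basis_outcome u L R I = (u I, (2 * (u I \<bullet> (L *v u I))) *\<^sub>R (R ** outer (u I) (u I) ** R))"

definition dense_sign_outcome ::
    "('n::finite \<Rightarrow> real^'n) \<Rightarrow> real^'n^'n \<Rightarrow> ('n \<Rightarrow> real) \<Rightarrow> real^'n^'n \<Rightarrow> ('n \<Rightarrow> bool)
      \<Rightarrow> (real^'n) \<times> (real^'n^'n)" where
  "dense_sign_outcome u L lam Wi s = (let w = (\<Sum>i\<in>UNIV. (sgn_of (s i) * sqrt (lam i)) *\<^sub>R u i)
    in (w, (w \<bullet> (L *v w)) *\<^sub>R (Wi ** outer w w ** Wi - Wi)))"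

lemma samp_sparse_eq:
  "samp Sparse \<gamma> eig W L =
   bind_pmf (embed_pmf (\<lambda>i. (1 - \<gamma>) * fst (eig W) i + \<gamma> / real CARD('n))) (\<lambda>I.
     bind_pmf (embed_pmf (\<lambda>i. (1 - \<gamma>) * fst (eig W) i + \<gamma> / real CARD('n))) (\<lambda>J.
       bind_pmf (pmf_of_set UNIV) (\<lambda>s. return_pmf
         (sparse_outcome (snd (eig W)) L (\<lambda>i. (1 - \<gamma>) * fst (eig W) i + \<gamma> / real CARD('n)) I J s))))"
  for eig :: "'n::finite eigfun"
  by (simp add: samp_def sparse_outcome_def Let_def)

lemma samp_dense_eq:
  "samp Dense \<gamma> eig W L =
   bind_pmf (bernoulli_pmf (1/2)) (\<lambda>B. if B then
     bind_pmf (embed_pmf (\<lambda>i. (1 - \<gamma>) * fst (eig W) i + \<gamma> / real CARD('n))) (\<lambda>I.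
        return_pmf (dense_basis_outcome (snd (eig W)) L (inv_sqrt eig W) I))
     else bind_pmf (pmf_of_set (UNIV :: ('n \<Rightarrow> bool) set)) (\<lambda>s. return_pmf
        (dense_sign_outcome (snd (eig W)) L (\<lambda>i. (1 - \<gamma>) * fst (eig W) i + \<gamma> / real CARD('n)) (matrix_inv W) s)))"
  for eig :: "'n::finite eigfun"
  unfolding samp_def dense_basis_outcome_def dense_sign_outcome_def Let_def by simp

definition rademacher :: "('n \<Rightarrow> bool) \<Rightarrow> 'n \<Rightarrow> real" where
  "rademacher s i = sgn_of (s i)"

lemma rademacher_square: "rademacher s i * rademacher s i = 1"
  by (simp add: rademacher_def sgn_of_def)

lemma sum_rademacher_flip:
  fixes g :: "('n::finite \<Rightarrow> bool) \<Rightarrow> real"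
  assumes "\<And>s. g (s(i := \<not> s i)) = g s"
  shows "(\<Sum>s\<in>UNIV. rademacher s i * g s) = 0"
proof -
  define f :: "('n \<Rightarrow> bool) \<Rightarrow> ('n \<Rightarrow> bool)" where "f = (\<lambda>s. s(i := \<not> s i))"
  have ff: "f (f s) = s" for s by (simp add: f_def fun_eq_iff)
  have inj: "inj f" by (metis ff injI)
  have surj: "f ` UNIV = UNIV" by (metis ff surj_def)
  have "(\<Sum>s\<in>UNIV. rademacher s i * g s) = (\<Sum>s\<in>f ` UNIV. rademacher s i * g s)" by (simp add: surj)
  also have "\<dots> = (\<Sum>s\<in>UNIV. rademacher (f s) i * g (f s))" by (subst sum.reindex[OF inj]) simp
  also have "\<dots> = (\<Sum>s\<in>UNIV. - (rademacher s i * g s))"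
    using assms by (intro sum.cong) (auto simp: f_def rademacher_def sgn_of_def)
  finally show ?thesis by (simp add: sum_negf)
qed

lemma sum_swap3: "(\<Sum>s\<in>A. \<Sum>i\<in>B. \<Sum>j\<in>C. F s i j) = (\<Sum>i\<in>B. \<Sum>j\<in>C. \<Sum>s\<in>A. F s i j)"
proof -
  have "(\<Sum>s\<in>A. \<Sum>i\<in>B. \<Sum>j\<in>C. F s i j) = (\<Sum>i\<in>B. \<Sum>s\<in>A. \<Sum>j\<in>C. F s i j)" by (rule sum.swap)
  also have "\<dots> = (\<Sum>i\<in>B. \<Sum>j\<in>C. \<Sum>s\<in>A. F s i j)" by (rule sum.cong[OF refl], rule sum.swap)
  finally show ?thesis .
qed

lemma sum_rademacher2:
  fixes i j :: "'n::finite"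
  shows "(\<Sum>s\<in>UNIV. rademacher s i * rademacher s j)
    = (if i = j then real CARD('n \<Rightarrow> bool) else 0)"
proof (cases "i = j")
  case True thus ?thesis by (simp add: rademacher_square)
next
  case False
  thus ?thesis by (simp, intro sum_rademacher_flip) (simp add: rademacher_def)
qed

lemma sum_rademacher4:
  fixes i j k l :: "'n::finite"
  shows "(\<Sum>s\<in>UNIV. rademacher s i * rademacher s j * rademacher s k * rademacher s l) =
   real CARD('n \<Rightarrow> bool) * (if k = l then (if i = j then 1 else 0)
       else (if (i = k \<and> j = l) \<or> (i = l \<and> j = k) then 1 else 0))"
    (is "?lhs = _")
proof -
  consider (ij) "i = j" | (ik) "i \<noteq> j" "i = k" | (il) "i \<noteq> j" "i \<noteq> k" "i = l"
    | (single) "i \<noteq> j" "i \<noteq> k" "i \<noteq> l"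
    by blast
  thus ?thesis
  proof cases
    case ij
    hence "?lhs = (\<Sum>s\<in>UNIV. rademacher s k * rademacher s l)" by (simp add: rademacher_square)
    thus ?thesis using ij by (simp add: sum_rademacher2) fastforce
  next
    case ik
    hence "?lhs = (\<Sum>s\<in>UNIV. rademacher s j * rademacher s l)"
      by (intro sum.cong) (auto simp: rademacher_square mult_ac)
    thus ?thesis using ik by (auto simp: sum_rademacher2)
  next
    case il
    hence "?lhs = (\<Sum>s\<in>UNIV. rademacher s j * rademacher s k)"
      by (intro sum.cong) (auto simp: rademacher_square mult_ac)
    thus ?thesis using il by (auto simp: sum_rademacher2)
  next
    case single
    have "(\<Sum>s\<in>UNIV. rademacher s i * (rademacher s j * rademacher s k * rademacher s l)) = 0"
      by (rule sum_rademacher_flip) (use single in \<open>simp add: rademacher_def\<close>)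
    thus ?thesis using single by (simp add: mult_ac)
  qed
qed

lemma sum_rademacher_quadratic:
  fixes P :: "'n::finite \<Rightarrow> 'n \<Rightarrow> real"
  shows "(\<Sum>s\<in>UNIV. \<Sum>i\<in>UNIV. \<Sum>j\<in>UNIV. rademacher s i * rademacher s j * P i j)
    = real CARD('n \<Rightarrow> bool) * (\<Sum>i\<in>UNIV. P i i)"
proof -
  have "(\<Sum>s\<in>UNIV. \<Sum>i\<in>UNIV. \<Sum>j\<in>UNIV. rademacher s i * rademacher s j * P i j) =
        (\<Sum>i\<in>UNIV. \<Sum>j\<in>UNIV. (\<Sum>s\<in>UNIV. rademacher s i * rademacher s j) * P i j)"
    by (subst sum_swap3) (simp add: sum_distrib_right)
  also have "\<dots> = (\<Sum>i\<in>UNIV. real CARD('n \<Rightarrow> bool) * P i i)"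
    by (simp add: sum_rademacher2 if_distrib if_distribR cong: if_cong)
  finally show ?thesis by (simp add: sum_distrib_left)
qed

lemma sum_rademacher_mult_quadratic:
  fixes P :: "'n::finite \<Rightarrow> 'n \<Rightarrow> real"
  shows "(\<Sum>s\<in>UNIV. rademacher s k * rademacher s l
      * (\<Sum>i\<in>UNIV. \<Sum>j\<in>UNIV. rademacher s i * rademacher s j * P i j))
    = real CARD('n \<Rightarrow> bool) * (if k = l then (\<Sum>i\<in>UNIV. P i i) else P k l + P l k)"
proof -
  have "(\<Sum>s\<in>UNIV. rademacher s k * rademacher s l
      * (\<Sum>i\<in>UNIV. \<Sum>j\<in>UNIV. rademacher s i * rademacher s j * P i j))
    = (\<Sum>s\<in>UNIV. \<Sum>i\<in>UNIV. \<Sum>j\<in>UNIV.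
      rademacher s i * rademacher s j * rademacher s k * rademacher s l * P i j)"
    by (simp add: sum_distrib_left mult_ac)
  also have "\<dots> = (\<Sum>i\<in>UNIV. \<Sum>j\<in>UNIV. \<Sum>s\<in>UNIV.
      rademacher s i * rademacher s j * rademacher s k * rademacher s l * P i j)"
    by (rule sum_swap3)
  also have "\<dots> = (\<Sum>i\<in>UNIV. \<Sum>j\<in>UNIV.
      (\<Sum>s\<in>UNIV. rademacher s i * rademacher s j * rademacher s k * rademacher s l) * P i j)"
    by (simp add: sum_distrib_right)
  also have "\<dots> = real CARD('n \<Rightarrow> bool) * (if k = l then (\<Sum>i\<in>UNIV. P i i) else P k l + P l k)"
  proof (cases "k = l")
    case True
    have e: "(\<Sum>s\<in>UNIV. rademacher s i * rademacher s j * rademacher s k * rademacher s l) * P i j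
        = real CARD('n \<Rightarrow> bool) * (if i = j then P i j else 0)" for i j
      using True by (simp add: sum_rademacher4)
    have d: "(\<Sum>j\<in>UNIV. if i = j then P i j else 0) = P i i" for i by simp
    show ?thesis by (simp only: e sum_distrib_left[symmetric] d) (simp add: True)
  next
    case False
    have e: "(\<Sum>s\<in>UNIV. rademacher s i * rademacher s j * rademacher s k * rademacher s l) * P i j
        = real CARD('n \<Rightarrow> bool)
          * ((if i = k \<and> j = l then P i j else 0) + (if i = l \<and> j = k then P i j else 0))" for i j
      using False by (auto simp: sum_rademacher4)
    have d1: "(\<Sum>j\<in>UNIV. if i = k \<and> j = l then P i j else 0) = (if i = k then P k l else 0)" for i
      by (cases "i = k") simp_all
    have d2: "(\<Sum>j\<in>UNIV. if i = l \<and> j = k then P i j else 0) = (if i = l then P l k else 0)" for i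
      by (cases "i = l") simp_all
    show ?thesis by (simp only: e sum_distrib_left[symmetric] sum.distrib d1 d2) (simp add: False)
  qed
  finally show ?thesis .
qed

text \<open>The eigenbasis \<open>u\<close> of the iterate, a symmetric loss \<open>L\<close>, and the sampling
  probabilities \<open>p\<close> of the basis vectors.\<close>

locale sampling_frame =
  fixes u :: "'n::finite \<Rightarrow> real^'n" and L :: "real^'n^'n" and p :: "'n \<Rightarrow> real"
  assumes u_orthonormal: "orthonormal u" and L_symmetric: "transpose L = L"
    and p_pos: "\<And>i. 0 < p i" and p_sum: "(\<Sum>i\<in>UNIV. p i) = 1"
begin

lemma p_nonneg: "0 \<le> p i"
  using p_pos less_imp_le by blast

lemma quadratic_form_half_sum:
  "((1 / sqrt 2) *\<^sub>R u I + (1 / sqrt 2) *\<^sub>R u J) \<bullet> (L *v ((1 / sqrt 2) *\<^sub>R u I + (1 / sqrt 2) *\<^sub>R u J)) =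
     ((u I \<bullet> (L *v u I)) + (u J \<bullet> (L *v u J))) / 2 + (u I \<bullet> (L *v u J))"
  unfolding quadratic_form_pair symmetric_coeff[OF L_symmetric, where i=J and j=I]
    by (simp add: field_simps)

lemma quadratic_form_half_diff:
  "((1 / sqrt 2) *\<^sub>R u I - (1 / sqrt 2) *\<^sub>R u J) \<bullet> (L *v ((1 / sqrt 2) *\<^sub>R u I - (1 / sqrt 2) *\<^sub>R u J)) =
     ((u I \<bullet> (L *v u I)) + (u J \<bullet> (L *v u J))) / 2 - (u I \<bullet> (L *v u J))"
proof -
  have e: "(1 / sqrt 2) *\<^sub>R u I - (1 / sqrt 2) *\<^sub>R u J = (1 / sqrt 2) *\<^sub>R u I + (- 1 / sqrt 2) *\<^sub>R u J"
    by simp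
  show ?thesis unfolding e quadratic_form_pair symmetric_coeff[OF L_symmetric, where i=J and j=I]
    by (simp add: field_simps)
qed

lemma sparse_expected_loss:
  "measure_pmf.expectation (bind_pmf (embed_pmf p) (\<lambda>I. bind_pmf (embed_pmf p) (\<lambda>J.
      bind_pmf (pmf_of_set UNIV) (\<lambda>s. return_pmf (sparse_outcome u L p I J s))))) (\<lambda>(w, Lt). w \<bullet> (L *v w))
   = (\<Sum>i\<in>UNIV. p i * (u i \<bullet> (L *v u i)))"
proof -
  have step: "p I * p J * (((\<lambda>(w, Lt). w \<bullet> (L *v w)) (sparse_outcome u L p I J True) +
        (\<lambda>(w, Lt). w \<bullet> (L *v w)) (sparse_outcome u L p I J False)) / 2)
      = p I * p J * (u I \<bullet> (L *v u I)) / 2 + p I * p J * (u J \<bullet> (L *v u J)) / 2" for I J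
  proof (cases "I = J")
    case True thus ?thesis by (simp add: sparse_outcome_def field_simps)
  next
    case False
    thus ?thesis
      by (simp add: sparse_outcome_def Let_def quadratic_form_half_sum quadratic_form_half_diff sgn_of_def
          field_simps)
  qed
  have half: "(\<Sum>I\<in>UNIV. \<Sum>J\<in>UNIV. p I * p J * (u I \<bullet> (L *v u I)) / 2)
      = (\<Sum>I\<in>UNIV. p I * (u I \<bullet> (L *v u I))) / 2"
    by (simp add: sum_divide_distrib[symmetric] sum_distrib_right[symmetric] sum_distrib_left[symmetric]
        p_sum mult_ac)
  have "(\<Sum>I\<in>UNIV. \<Sum>J\<in>UNIV. p I * p J * (u J \<bullet> (L *v u J)) / 2)
      = (\<Sum>I\<in>UNIV. \<Sum>J\<in>UNIV. p J * p I * (u I \<bullet> (L *v u I)) / 2)"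
    by (rule sum.swap)
  hence "(\<Sum>I\<in>UNIV. \<Sum>J\<in>UNIV. p I * p J * (u I \<bullet> (L *v u I)) / 2 + p I * p J * (u J \<bullet> (L *v u J)) / 2)
     = (\<Sum>I\<in>UNIV. p I * (u I \<bullet> (L *v u I)))"
    using half by (simp add: sum.distrib mult_ac)
  thus ?thesis by (subst expectation_sparse_scheme[OF p_nonneg p_sum]) (simp only: step)
qed

lemma sparse_estimate_unbiased:
  assumes A_symmetric: "transpose A = A"
  shows "measure_pmf.expectation (bind_pmf (embed_pmf p) (\<lambda>I. bind_pmf (embed_pmf p) (\<lambda>J.
      bind_pmf (pmf_of_set UNIV) (\<lambda>s. return_pmf (sparse_outcome u L p I J s))))) (\<lambda>(w, Lt). frob A Lt)
   = frob A L"
proof -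
  have step: "p I * p J * (((\<lambda>(w, Lt). frob A Lt) (sparse_outcome u L p I J True) +
        (\<lambda>(w, Lt). frob A Lt) (sparse_outcome u L p I J False)) / 2)
      = (u I \<bullet> (A *v u J)) * (u I \<bullet> (L *v u J))" for I J
  proof (cases "I = J")
    case True
    have "p I \<noteq> 0" using p_pos[of I] by simp
    thus ?thesis using True
      by (simp add: sparse_outcome_def frob_scale_right frob_outer_right field_simps power2_eq_square)
  next
    case False
    have ne: "p I * p J \<noteq> 0" using p_pos[of I] p_pos[of J] by simp
    have s: "u J \<bullet> (A *v u I) = u I \<bullet> (A *v u J)" by (rule symmetric_coeff[OF A_symmetric])
    show ?thesis using False ne
      by (simp add: sparse_outcome_def Let_def quadratic_form_half_sum quadratic_form_half_diff sgn_of_def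
          frob_scale_right frob_add_right frob_diff_right frob_outer_right s frob_uminus_right field_simps)
  qed
  show ?thesis
    by (subst expectation_sparse_scheme[OF p_nonneg p_sum])
      (simp only: step frob_orthonormal[OF u_orthonormal, of A L])
qed

text \<open>In the basis \<open>u\<close>, every dense-scheme quantity is a quadratic form in the random signs.\<close>

definition sign_sample :: "('n \<Rightarrow> bool) \<Rightarrow> real^'n" where
  "sign_sample s = (\<Sum>i\<in>UNIV. (sgn_of (s i) * sqrt (p i)) *\<^sub>R u i)"

definition scaled_loss :: "'n \<Rightarrow> 'n \<Rightarrow> real" where
  "scaled_loss i j = sqrt (p i) * sqrt (p j) * (u i \<bullet> (L *v u j))"

definition inv_sqrt_weight :: "'n \<Rightarrow> real" where
  "inv_sqrt_weight i = 1 / sqrt (p i)"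

definition scaled_coeff :: "real^'n^'n \<Rightarrow> 'n \<Rightarrow> 'n \<Rightarrow> real" where
  "scaled_coeff A k l = inv_sqrt_weight k * inv_sqrt_weight l * (u k \<bullet> (A *v u l))"

lemma quadratic_form_sign_sample:
  "sign_sample s \<bullet> (L *v sign_sample s) = (\<Sum>i\<in>UNIV. \<Sum>j\<in>UNIV. rademacher s i * rademacher s j * scaled_loss i j)"
  unfolding sign_sample_def bilinear_form_expansion
    by (simp add: scaled_loss_def rademacher_def mult_ac)

lemma scaled_loss_commute: "scaled_loss i j = scaled_loss j i"
  unfolding scaled_loss_def using symmetric_coeff[OF L_symmetric, where u=u and i=i and j=j]
  by (simp add: mult_ac)

lemma scaled_loss_diag: "scaled_loss i i = p i * (u i \<bullet> (L *v u i))"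
  unfolding scaled_loss_def using p_nonneg[of i] by (simp add: mult.assoc[symmetric])

lemma dense_expected_loss:
  "measure_pmf.expectation (bind_pmf (bernoulli_pmf (1/2)) (\<lambda>B. if B then
            bind_pmf (embed_pmf p) (\<lambda>I. return_pmf (dense_basis_outcome u L R I))
          else bind_pmf (pmf_of_set (UNIV :: ('n \<Rightarrow> bool) set)) (\<lambda>s. return_pmf (dense_sign_outcome u L p Wi s))))
     (\<lambda>(w, Lt). w \<bullet> (L *v w)) = (\<Sum>i\<in>UNIV. p i * (u i \<bullet> (L *v u i)))"
proof -
  have e: "(\<lambda>(w, Lt). w \<bullet> (L *v w)) (dense_sign_outcome u L p Wi s)
      = (\<Sum>i\<in>UNIV. \<Sum>j\<in>UNIV. rademacher s i * rademacher s j * scaled_loss i j)" for s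
    using quadratic_form_sign_sample[of s]
    by (simp add: dense_sign_outcome_def Let_def sign_sample_def)
  have "(\<Sum>s\<in>UNIV. (\<lambda>(w, Lt). w \<bullet> (L *v w)) (dense_sign_outcome u L p Wi s))
      = real CARD('n \<Rightarrow> bool) * (\<Sum>i\<in>UNIV. scaled_loss i i)"
    by (simp only: e sum_rademacher_quadratic)
  hence "(\<Sum>s\<in>UNIV. (\<lambda>(w, Lt). w \<bullet> (L *v w)) (dense_sign_outcome u L p Wi s)) / real CARD('n \<Rightarrow> bool)
     = (\<Sum>i\<in>UNIV. p i * (u i \<bullet> (L *v u i)))"
    by (simp add: scaled_loss_diag)
  moreover have "(\<Sum>I\<in>UNIV. p I * (\<lambda>(w, Lt). w \<bullet> (L *v w)) (dense_basis_outcome u L R I))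
      = (\<Sum>i\<in>UNIV. p i * (u i \<bullet> (L *v u i)))"
    by (simp add: dense_basis_outcome_def)
  ultimately show ?thesis by (simp add: expectation_dense_scheme[OF p_nonneg p_sum])
qed

lemma inv_sqrt_weight_square: "inv_sqrt_weight i * inv_sqrt_weight i = 1 / p i"
  using p_pos[of i] by (simp add: inv_sqrt_weight_def)

lemma sqrt_mult_inv_sqrt_weight: "sqrt (p i) * inv_sqrt_weight i = 1"
  using p_pos[of i] by (simp add: inv_sqrt_weight_def)

lemma inverse_mult_sign_sample:
  "spectral (\<lambda>i. 1 / p i) u *v sign_sample s = (\<Sum>i\<in>UNIV. (rademacher s i * inv_sqrt_weight i) *\<^sub>R u i)"
proof -
  have "spectral (\<lambda>i. 1 / p i) u *v sign_sample s
      = (\<Sum>i\<in>UNIV. (sgn_of (s i) * sqrt (p i) * (1 / p i)) *\<^sub>R u i)"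
    by (simp add: sign_sample_def matrix_vector_mult_sum_right matrix_vector_mult_scaleR
        spectral_mult_basis[OF u_orthonormal])
  also have "\<dots> = (\<Sum>i\<in>UNIV. (rademacher s i * inv_sqrt_weight i) *\<^sub>R u i)"
  proof (rule sum.cong[OF refl])
    fix i
    have "sqrt (p i) * (1 / p i) = inv_sqrt_weight i"
      using p_pos[of i] by (simp add: inv_sqrt_weight_def field_simps)
    thus "(sgn_of (s i) * sqrt (p i) * (1 / p i)) *\<^sub>R u i = (rademacher s i * inv_sqrt_weight i) *\<^sub>R u i"
      by (simp only: rademacher_def mult.assoc)
  qed
  finally show ?thesis .
qed

lemma quadratic_form_inverse_sign_sample:
  "(spectral (\<lambda>i. 1 / p i) u *v sign_sample s) \<bullet> (A *v (spectral (\<lambda>i. 1 / p i) u *v sign_sample s)) =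
    (\<Sum>k\<in>UNIV. \<Sum>l\<in>UNIV. rademacher s k * rademacher s l * scaled_coeff A k l)"
  unfolding inverse_mult_sign_sample bilinear_form_expansion by (simp add: scaled_coeff_def mult_ac)

lemma frob_inverse_weights: "frob A (spectral (\<lambda>i. 1 / p i) u) = (\<Sum>k\<in>UNIV. scaled_coeff A k k)"
proof -
  have "frob A (spectral (\<lambda>i. 1 / p i) u)
      = (\<Sum>i\<in>UNIV. \<Sum>j\<in>UNIV. (u i \<bullet> (A *v u j)) * (if i = j then 1 / p j else 0))"
    by (simp add: frob_orthonormal[OF u_orthonormal] inner_spectral_basis[OF u_orthonormal])
  also have "\<dots> = (\<Sum>i\<in>UNIV. (u i \<bullet> (A *v u i)) / p i)"
    by (simp add: if_distrib cong: if_cong)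
  also have "\<dots> = (\<Sum>k\<in>UNIV. scaled_coeff A k k)"
    by (intro sum.cong refl) (simp add: scaled_coeff_def inv_sqrt_weight_square)
  finally show ?thesis .
qed

lemma frob_dense_sign_outcome:
  "(\<lambda>(w, Lt). frob A Lt) (dense_sign_outcome u L p (spectral (\<lambda>i. 1 / p i) u) s) =
    (\<Sum>i\<in>UNIV. \<Sum>j\<in>UNIV. rademacher s i * rademacher s j * scaled_loss i j) *
    ((\<Sum>k\<in>UNIV. \<Sum>l\<in>UNIV. rademacher s k * rademacher s l * scaled_coeff A k l) - (\<Sum>k\<in>UNIV. scaled_coeff A k k))"
proof -
  let ?Wi = "spectral (\<lambda>i. 1 / p i) u"
  have m: "?Wi ** outer (sign_sample s) (sign_sample s) ** ?Wi
      = outer (?Wi *v sign_sample s) (?Wi *v sign_sample s)"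
    by (simp add: matrix_mult_outer outer_mult_matrix transpose_spectral)
  show ?thesis
    unfolding dense_sign_outcome_def Let_def sign_sample_def[symmetric]
    by (simp add: frob_scale_right frob_diff_right m frob_outer_right quadratic_form_inverse_sign_sample
        frob_inverse_weights quadratic_form_sign_sample)
qed

lemma frob_dense_basis_outcome:
  "(\<lambda>(w, Lt). frob A Lt) (dense_basis_outcome u L (spectral inv_sqrt_weight u) I)
    = 2 * (u I \<bullet> (L *v u I)) * (u I \<bullet> (A *v u I)) / p I"
proof -
  have m: "spectral inv_sqrt_weight u ** outer (u I) (u I) ** spectral inv_sqrt_weight u
      = (inv_sqrt_weight I * inv_sqrt_weight I) *\<^sub>R outer (u I) (u I)"
    by (simp add: matrix_mult_outer outer_mult_matrix transpose_spectral spectral_mult_basis[OF u_orthonormal]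
        outer_scaleR_right) (simp add: vec_eq_iff)
  show ?thesis
    by (simp add: dense_basis_outcome_def m frob_scale_right frob_outer_right inv_sqrt_weight_square)
qed

text \<open>Averaging over the signs kills the diagonal part of \<open>\<langle>A, L\<^sup>~\<rangle>\<close> and doubles the
  off-diagonal part; the basis-vector branch supplies the diagonal part twice.\<close>

lemma sum_frob_dense_sign_outcome:
  "(\<Sum>s\<in>UNIV. (\<lambda>(w, Lt). frob A Lt) (dense_sign_outcome u L p (spectral (\<lambda>i. 1 / p i) u) s))
    = real CARD('n \<Rightarrow> bool) * (2 * (\<Sum>k\<in>UNIV. \<Sum>l\<in>UNIV. if k = l then 0
        else (u k \<bullet> (A *v u l)) * (u k \<bullet> (L *v u l))))"
proof -
  define S where "S = (\<Sum>i\<in>UNIV. scaled_loss i i)"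
  define ell where "ell = (\<lambda>s. \<Sum>i\<in>UNIV. \<Sum>j\<in>UNIV. rademacher s i * rademacher s j * scaled_loss i j)"
  define X where "X = (\<lambda>s. \<Sum>k\<in>UNIV. \<Sum>l\<in>UNIV. rademacher s k * rademacher s l * scaled_coeff A k l)"
  define F where "F = (\<Sum>k\<in>UNIV. scaled_coeff A k k)"
  define Off where "Off = (\<Sum>k\<in>UNIV. \<Sum>l\<in>UNIV. if k = l then 0 else (u k \<bullet> (A *v u l)) * (u k \<bullet> (L *v u l)))"
  have coeff: "scaled_coeff A k l * scaled_loss k l = (u k \<bullet> (A *v u l)) * (u k \<bullet> (L *v u l))" for k l
  proof -
    have "scaled_coeff A k l * scaled_loss k l
        = (sqrt (p k) * inv_sqrt_weight k) * (sqrt (p l) * inv_sqrt_weight l)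
          * (u k \<bullet> (A *v u l)) * (u k \<bullet> (L *v u l))"
      by (simp add: scaled_coeff_def scaled_loss_def mult_ac)
    thus ?thesis by (simp add: sqrt_mult_inv_sqrt_weight)
  qed
  have split_term: "scaled_coeff A k l * (if k = l then S else scaled_loss k l + scaled_loss l k)
      = (if k = l then S * scaled_coeff A k k else 0)
        + 2 * (if k = l then 0 else (u k \<bullet> (A *v u l)) * (u k \<bullet> (L *v u l)))" for k l
    using coeff[of k l] by (auto simp: scaled_loss_commute[of l k] algebra_simps)
  have "(\<Sum>s\<in>UNIV. X s * ell s)
      = (\<Sum>k\<in>UNIV. \<Sum>l\<in>UNIV. \<Sum>s\<in>UNIV. scaled_coeff A k l * (rademacher s k * rademacher s l * ell s))"
    unfolding X_def
      by (subst sum_swap3[symmetric]) (simp add: sum_distrib_right sum_distrib_left mult_ac)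
  also have "\<dots> = (\<Sum>k\<in>UNIV. \<Sum>l\<in>UNIV. scaled_coeff A k l
      * (real CARD('n \<Rightarrow> bool) * (if k = l then S else scaled_loss k l + scaled_loss l k)))"
    unfolding ell_def S_def
      by (simp only: sum_distrib_left[symmetric] sum_rademacher_mult_quadratic)
  also have "\<dots> = real CARD('n \<Rightarrow> bool) * (\<Sum>k\<in>UNIV. \<Sum>l\<in>UNIV.
      scaled_coeff A k l * (if k = l then S else scaled_loss k l + scaled_loss l k))"
    by (simp add: sum_distrib_left mult.left_commute)
  also have "\<dots> = real CARD('n \<Rightarrow> bool) * (\<Sum>k\<in>UNIV. \<Sum>l\<in>UNIV.
      (if k = l then S * scaled_coeff A k k else 0)
      + 2 * (if k = l then 0 else (u k \<bullet> (A *v u l)) * (u k \<bullet> (L *v u l))))"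
    by (simp only: split_term)
  also have "\<dots> = real CARD('n \<Rightarrow> bool) * (S * F + 2 * Off)"
    by (simp only: sum.distrib sum_distrib_left[symmetric] F_def Off_def) (simp add: sum_distrib_left)
  finally have XS: "(\<Sum>s\<in>UNIV. X s * ell s) = real CARD('n \<Rightarrow> bool) * (S * F + 2 * Off)" .
  have "(\<Sum>s\<in>UNIV. (\<lambda>(w, Lt). frob A Lt) (dense_sign_outcome u L p (spectral (\<lambda>i. 1 / p i) u) s))
      = (\<Sum>s\<in>UNIV. X s * ell s) - F * (\<Sum>s\<in>UNIV. ell s)"
    by (simp add: frob_dense_sign_outcome X_def F_def ell_def algebra_simps sum_subtractf sum_distrib_left)
  also have "(\<Sum>s\<in>UNIV. ell s) = real CARD('n \<Rightarrow> bool) * S"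
    unfolding ell_def S_def by (rule sum_rademacher_quadratic)
  finally show ?thesis unfolding XS Off_def[symmetric] by (simp add: algebra_simps)
qed

lemma dense_estimate_unbiased:
  assumes A_symmetric: "transpose A = A"
  shows "measure_pmf.expectation (bind_pmf (bernoulli_pmf (1/2)) (\<lambda>B. if B then
            bind_pmf (embed_pmf p) (\<lambda>I. return_pmf (dense_basis_outcome u L (spectral inv_sqrt_weight u) I))
          else bind_pmf (pmf_of_set (UNIV :: ('n \<Rightarrow> bool) set))
            (\<lambda>s. return_pmf (dense_sign_outcome u L p (spectral (\<lambda>i. 1 / p i) u) s))))
     (\<lambda>(w, Lt). frob A Lt) = frob A L"
proof -
  define Off where "Off = (\<Sum>k\<in>UNIV. \<Sum>l\<in>UNIV. if k = l then 0 else (u k \<bullet> (A *v u l)) * (u k \<bullet> (L *v u l)))"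
  have basis: "(\<Sum>I\<in>UNIV. p I * (\<lambda>(w, Lt). frob A Lt) (dense_basis_outcome u L (spectral inv_sqrt_weight u) I))
      = 2 * (\<Sum>k\<in>UNIV. (u k \<bullet> (A *v u k)) * (u k \<bullet> (L *v u k)))"
  proof -
    have "p I * (\<lambda>(w, Lt). frob A Lt) (dense_basis_outcome u L (spectral inv_sqrt_weight u) I)
        = 2 * ((u I \<bullet> (A *v u I)) * (u I \<bullet> (L *v u I)))" for I
      using p_pos[of I] by (simp only: frob_dense_basis_outcome) (simp add: field_simps)
    thus ?thesis by (simp add: sum_distrib_left)
  qed
  have "frob A L = (\<Sum>k\<in>UNIV. \<Sum>l\<in>UNIV. (u k \<bullet> (A *v u l)) * (u k \<bullet> (L *v u l)))"
    by (simp add: frob_orthonormal[OF u_orthonormal])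
  also have "\<dots> = (\<Sum>k\<in>UNIV. \<Sum>l\<in>UNIV.
      (if k = l then (u k \<bullet> (A *v u l)) * (u k \<bullet> (L *v u l)) else 0) + (if k = l then 0 else (u k \<bullet> (A *v u l)) * (u k \<bullet> (L *v u l))))"
    by (intro sum.cong refl) simp
  also have "\<dots> = (\<Sum>k\<in>UNIV. (u k \<bullet> (A *v u k)) * (u k \<bullet> (L *v u k))) + Off"
    by (simp add: sum.distrib Off_def)
  finally have split: "frob A L = (\<Sum>k\<in>UNIV. (u k \<bullet> (A *v u k)) * (u k \<bullet> (L *v u k))) + Off" .
  show ?thesis
    using sum_frob_dense_sign_outcome[of A]
    by (simp add: expectation_dense_scheme[OF p_nonneg p_sum] basis split Off_def)
qed

end

section \<open>The comparator\<close>

definition comparator :: "real \<Rightarrow> real^'n::finite \<Rightarrow> real^'n^'n" where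
  "comparator T u = (1 - 1 / T) *\<^sub>R outer u u + (1 / (real CARD('n) * T)) *\<^sub>R mat 1"

lemma transpose_comparator: "transpose (comparator T u) = comparator T u"
  by (simp add: comparator_def transpose_add transpose_scalar transpose_outer)

lemma quadratic_form_comparator:
  "x \<bullet> (comparator T u *v x) = (1 - 1/T) * (u \<bullet> x)^2 + (1 / (real CARD('n) * T)) * (x \<bullet> x)"
  for u x :: "real^'n::finite"
  by (simp add: comparator_def matrix_vector_mult_add_rdistrib scaleR_matrix_vector_mult
      outer_matrix_vector_mult inner_add_right power2_eq_square inner_commute)

lemma posdef_density_comparator:
  fixes u :: "real^'n::finite"
  assumes un: "norm u = 1" and T: "T \<ge> 1"
  shows "posdef (comparator T u) \<and> density (comparator T u)"
proof -
  define d where "d = real CARD('n)"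
  have dpos: "d > 0" by (simp add: d_def)
  have pd: "posdef (comparator T u)"
    unfolding posdef_def symmetric_mat_def
  proof (intro conjI transpose_comparator allI impI)
    fix x :: "real^'n" assume "x \<noteq> 0"
    hence "(1 / (d * T)) * (x \<bullet> x) > 0" using dpos T by simp
    moreover have "(1 - 1/T) * (u \<bullet> x)^2 \<ge> 0"
      using T by (intro mult_nonneg_nonneg) (simp_all add: field_simps)
    ultimately show "x \<bullet> (comparator T u *v x) > 0"
      unfolding quadratic_form_comparator d_def by linarith
  qed
  have "u \<bullet> u = 1" using un by (simp add: norm_eq_sqrt_inner)
  hence "trace (comparator T u) = (1 - 1/T) + (1 / (d * T)) * d"
    by (simp add: comparator_def trace_add trace_scaleR trace_outer trace_I d_def)
  hence "trace (comparator T u) = 1" using dpos T by (simp add: field_simps)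
  thus ?thesis using pd posdef_imp_psd by (simp add: density_def)
qed

lemma det_comparator_ge:
  fixes eig :: "'n::finite eigfun" and u :: "real^'n"
  assumes ev: "valid_eig eig" and un: "norm u = 1" and T: "T \<ge> 1"
  shows "(1 / (real CARD('n) * T)) ^ CARD('n) \<le> det (comparator T u)"
proof -
  define c where "c = 1 / (real CARD('n) * T)"
  have c: "c > 0" using T by (simp add: c_def)
  obtain nu z where oz: "orthonormal z" and Us: "comparator T u = spectral nu z"
    using posdef_spectralE[OF ev] posdef_density_comparator[OF un T] by blast
  have "c \<le> nu i" for i
  proof -
    have "nu i = z i \<bullet> (comparator T u *v z i)" by (simp add: Us inner_spectral_basis[OF oz])
    also have "\<dots> = (1 - 1/T) * (u \<bullet> z i)^2 + c"
      using oz by (simp add: quadratic_form_comparator orthonormal_def c_def)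
    finally have "nu i = (1 - 1/T) * (u \<bullet> z i)^2 + c" .
    moreover have "0 \<le> (1 - 1/T) * (u \<bullet> z i)^2"
      using T by (intro mult_nonneg_nonneg) (simp_all add: field_simps)
    ultimately show ?thesis by linarith
  qed
  hence "(\<Prod>i\<in>(UNIV::'n set). c) \<le> (\<Prod>i\<in>UNIV. nu i)" by (intro prod_mono) (use c in auto)
  thus ?thesis by (simp add: Us det_spectral[OF oz] c_def)
qed

lemma logdet_div_comparator_W1_le:
  fixes eig :: "'n::finite eigfun" and u :: "real^'n"
  assumes ev: "valid_eig eig" and un: "norm u = 1" and T: "T \<ge> 1"
  shows "logdet_div (comparator T u) W1 \<le> real CARD('n) * ln T"
proof -
  define d where "d = real CARD('n)"
  define U where "U = comparator T u"
  have dpos: "d > 0" by (simp add: d_def)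
  have U: "posdef U" "density U" using posdef_density_comparator[OF un T] by (simp_all add: U_def)
  have "ln ((1 / (d * T)) ^ CARD('n)) \<le> ln (det U)"
    using det_comparator_ge[OF ev un T] dpos T by (intro ln_mono) (simp_all add: U_def d_def)
  moreover have "ln ((1 / (d * T)) ^ CARD('n)) = d * (- ln d - ln T)"
    using dpos T by (simp add: ln_realpow ln_div ln_mult d_def)
  moreover have "ln (det (W1 :: real^'n^'n)) = - d * ln d"
    using dpos by (simp add: det_W1 ln_realpow ln_div d_def)
  moreover have "trace (matrix_inv W1 ** U) = d"
    using U by (simp add: matrix_inv_W1 scalar_matrix_assoc[symmetric] trace_scaleR density_def d_def)
  moreover have "logdet_div U W1 = trace (matrix_inv W1 ** U) - ln (det U) + ln (det (W1 :: real^'n^'n)) - d"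
    using logdet_div_eq[OF ev U(1) conjunct1[OF posdef_density_W1]] by (simp add: d_def)
  ultimately show ?thesis by (simp add: U_def d_def algebra_simps)
qed

section \<open>One round in expectation\<close>

lemma abs_trace_le_card:
  fixes L :: "real^'n::finite^'n" and v :: "'n \<Rightarrow> real^'n"
  assumes o: "orthonormal v" and L: "spec_norm L \<le> 1"
  shows "\<bar>trace L\<bar> \<le> real CARD('n)"
proof -
  have "\<bar>v i \<bullet> (L *v v i)\<bar> \<le> 1" for i
  proof -
    have "v i \<bullet> v i = 1" using o by (simp add: orthonormal_def)
    hence "norm (v i) = 1" by (simp add: norm_eq_sqrt_inner)
    thus ?thesis using abs_quadratic_form_le[OF L, of "v i"] by simp
  qed
  hence "\<bar>trace L\<bar> \<le> (\<Sum>i\<in>(UNIV::'n set). 1)"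
    unfolding trace_orthonormal[OF o] by (intro order.trans[OF sum_abs] sum_mono)
  thus ?thesis by simp
qed

lemma sampling_frame_mixture:
  fixes eig :: "'n::finite eigfun" and W L :: "real^'n^'n"
  assumes ev: "valid_eig eig" and W: "posdef W" "density W" and L: "symmetric_mat L"
    and g: "0 \<le> \<gamma>" "\<gamma> \<le> 1"
  shows "sampling_frame (snd (eig W)) L (\<lambda>i. (1 - \<gamma>) * fst (eig W) i + \<gamma> / real CARD('n))"
proof -
  let ?m = "fst (eig W)" and ?v = "snd (eig W)"
  have o: "orthonormal ?v" and mpos: "\<And>i. ?m i > 0" and Ws: "W = spectral ?m ?v"
    using posdef_eig[OF ev W(1)] by auto
  have "trace W = trace (spectral ?m ?v)" using Ws by (rule arg_cong)
  hence msum: "(\<Sum>i\<in>UNIV. ?m i) = 1"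
    using W(2) trace_spectral[OF o, of ?m] by (simp add: density_def)
  show ?thesis
  proof
    show "orthonormal ?v" by (rule o)
    show "transpose L = L" using L by (simp add: symmetric_mat_def)
    show "0 < (1 - \<gamma>) * ?m i + \<gamma> / real CARD('n)" for i
    proof (cases "\<gamma> = 1")
      case False
      hence "(1 - \<gamma>) * ?m i > 0" using g mpos[of i] by simp
      thus ?thesis using g by (simp add: add_pos_nonneg)
    qed simp
    show "(\<Sum>i\<in>UNIV. (1 - \<gamma>) * ?m i + \<gamma> / real CARD('n)) = 1"
      by (simp add: sum.distrib sum_distrib_left[symmetric] msum)
  qed
qed

lemma samp_expected_loss:
  fixes eig :: "'n::finite eigfun" and W L :: "real^'n^'n"
  assumes ev: "valid_eig eig" and W: "posdef W" "density W" and L: "symmetric_mat L"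
    and g: "0 \<le> \<gamma>" "\<gamma> \<le> 1"
  shows "measure_pmf.expectation (samp mode \<gamma> eig W L) (\<lambda>(w, Lt). w \<bullet> (L *v w))
    = (1 - \<gamma>) * frob W L + \<gamma> * (trace L / real CARD('n))"
proof -
  let ?m = "fst (eig W)" and ?v = "snd (eig W)"
  define lam where "lam = (\<lambda>i. (1 - \<gamma>) * ?m i + \<gamma> / real CARD('n))"
  interpret sampling_frame ?v L lam
    unfolding lam_def by (rule sampling_frame_mixture[OF ev W L g])
  have Ws: "W = spectral ?m ?v" using posdef_eig[OF ev W(1)] by auto
  have "measure_pmf.expectation (samp mode \<gamma> eig W L) (\<lambda>(w, Lt). w \<bullet> (L *v w))
      = (\<Sum>i\<in>UNIV. lam i * (?v i \<bullet> (L *v ?v i)))"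
    by (cases mode) (simp_all only: samp_sparse_eq samp_dense_eq lam_def[symmetric]
        sparse_expected_loss dense_expected_loss)
  also have "\<dots> = (\<Sum>i\<in>UNIV. (1 - \<gamma>) * (?m i * (?v i \<bullet> (L *v ?v i)))
      + \<gamma> / real CARD('n) * (?v i \<bullet> (L *v ?v i)))"
    by (intro sum.cong refl) (simp add: lam_def algebra_simps)
  also have "\<dots> = (1 - \<gamma>) * (\<Sum>i\<in>UNIV. ?m i * (?v i \<bullet> (L *v ?v i)))
      + \<gamma> / real CARD('n) * (\<Sum>i\<in>UNIV. ?v i \<bullet> (L *v ?v i))"
    by (simp only: sum.distrib sum_distrib_left)
  also have "(\<Sum>i\<in>UNIV. ?m i * (?v i \<bullet> (L *v ?v i))) = frob W L"
    by (subst (2) Ws) (simp add: frob_orthonormal[OF u_orthonormal] inner_spectral_basis[OF u_orthonormal]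
        if_distrib if_distribR cong: if_cong)
  also have "(\<Sum>i\<in>UNIV. ?v i \<bullet> (L *v ?v i)) = trace L"
    by (rule trace_orthonormal[OF u_orthonormal, symmetric])
  finally show ?thesis by simp
qed

lemma samp_estimate_unbiased:
  fixes eig :: "'n::finite eigfun" and W L A :: "real^'n^'n"
  assumes ev: "valid_eig eig" and W: "posdef W" "density W" and L: "symmetric_mat L"
    and mode: "(mode = Sparse \<and> 0 \<le> \<gamma> \<and> \<gamma> \<le> 1) \<or> (mode = Dense \<and> \<gamma> = 0)"
    and A: "transpose A = A"
  shows "measure_pmf.expectation (samp mode \<gamma> eig W L) (\<lambda>(w, Lt). frob A Lt) = frob A L"
proof (cases mode)
  case Sparse
  define lam where "lam = (\<lambda>i. (1 - \<gamma>) * fst (eig W) i + \<gamma> / real CARD('n))"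
  interpret sampling_frame "snd (eig W)" L lam
    unfolding lam_def by (rule sampling_frame_mixture[OF ev W L]) (use mode Sparse in auto)
  show ?thesis unfolding Sparse samp_sparse_eq lam_def[symmetric]
    by (rule sparse_estimate_unbiased[OF A])
next
  case Dense
  let ?m = "fst (eig W)" and ?v = "snd (eig W)"
  have g0: "\<gamma> = 0" using mode Dense by auto
  interpret sampling_frame ?v L ?m
    using sampling_frame_mixture[OF ev W L, of 0] by simp
  have R: "inv_sqrt eig W = spectral inv_sqrt_weight ?v"
    by (simp add: inv_sqrt_def spectral_def inv_sqrt_weight_def)
  have o: "orthonormal ?v" and mpos: "\<And>i. ?m i > 0" and Ws: "W = spectral ?m ?v"
    using posdef_eig[OF ev W(1)] by auto
  have m0: "\<And>i. ?m i \<noteq> 0" using mpos by (metis less_irrefl)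
  have "matrix_inv W = matrix_inv (spectral ?m ?v)" using Ws by (rule arg_cong)
  also have "\<dots> = spectral (\<lambda>i. 1 / ?m i) ?v" by (rule matrix_inv_spectral[OF o m0])
  finally have Wi: "matrix_inv W = spectral (\<lambda>i. 1 / ?m i) ?v" .
  have lam: "(\<lambda>i. (1 - \<gamma>) * ?m i + \<gamma> / real CARD('n)) = ?m" using g0 by simp
  show ?thesis unfolding Dense samp_dense_eq lam R Wi by (rule dense_estimate_unbiased[OF A])
qed

text \<open>Against the comparator, the exploration rate \<open>\<gamma>\<close> and the smoothing \<open>1/T\<close> each cost
  at most twice their weight, since \<open>\<bar>u\<^sup>T L u\<bar> \<le> 1\<close> and \<open>\<bar>tr L\<bar> \<le> d\<close>.\<close>

lemma expected_round_regret_le: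
  fixes eig :: "'n::finite eigfun" and W L :: "real^'n^'n"
  assumes ev: "valid_eig eig" and W: "posdef W" "density W"
    and mode: "(mode = Sparse \<and> 0 \<le> \<gamma> \<and> \<gamma> \<le> 1) \<or> (mode = Dense \<and> \<gamma> = 0)"
    and Ls: "symmetric_mat L" and Ln: "spec_norm L \<le> 1" and un: "norm u = 1" and T: "T \<ge> 1"
  shows "measure_pmf.expectation (samp mode \<gamma> eig W L) (\<lambda>(w, Lt). frob (outer w w - outer u u) L)
    \<le> (1 - \<gamma>) * measure_pmf.expectation (samp mode \<gamma> eig W L) (\<lambda>(w, Lt). frob (W - comparator T u) Lt)
      + 2 * \<gamma> + 2 / T"
proof -
  define d where "d = real CARD('n)"
  define U where "U = comparator T u"
  have g: "0 \<le> \<gamma>" "\<gamma> \<le> 1" using mode by auto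
  have "transpose (W - U) = W - U"
    by (simp add: U_def transpose_diff transpose_comparator posdef_transpose[OF W(1)])
  hence E2: "measure_pmf.expectation (samp mode \<gamma> eig W L) (\<lambda>(w, Lt). frob (W - U) Lt) = frob (W - U) L"
    by (rule samp_estimate_unbiased[OF ev W Ls mode])
  have "measure_pmf.expectation (samp mode \<gamma> eig W L) (\<lambda>(w, Lt). frob (outer w w - outer u u) L)
      = measure_pmf.expectation (samp mode \<gamma> eig W L) (\<lambda>x. 1 * (\<lambda>(w, Lt). w \<bullet> (L *v w)) x + (- (u \<bullet> (L *v u))))"
    by (simp add: frob_diff_left frob_outer_left case_prod_unfold)
  also have "\<dots> = (1 - \<gamma>) * frob W L + \<gamma> * (trace L / d) - u \<bullet> (L *v u)"
    by (simp only: expectation_affine[OF finite_set_pmf_samp] samp_expected_loss[OF ev W Ls g] d_def) simp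
  finally have E1: "measure_pmf.expectation (samp mode \<gamma> eig W L) (\<lambda>(w, Lt). frob (outer w w - outer u u) L)
      = (1 - \<gamma>) * frob W L + \<gamma> * (trace L / d) - u \<bullet> (L *v u)" .
  have fU: "frob U L = (1 - 1/T) * (u \<bullet> (L *v u)) + (1 / T) * (trace L / d)"
    by (simp add: U_def comparator_def frob_add_left frob_scale_left frob_outer_left frob_mat_1 d_def)
  have "\<bar>u \<bullet> (L *v u)\<bar> \<le> 1" using abs_quadratic_form_le[OF Ln, of u] un by simp
  moreover have "\<bar>trace L / d\<bar> \<le> 1"
    using abs_trace_le_card[OF conjunct1[OF posdef_eig[OF ev W(1)]] Ln]
    by (simp add: d_def abs_divide divide_le_eq_1)
  ultimately have "trace L / d - u \<bullet> (L *v u) \<le> 2" by linarith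
  hence "(\<gamma> + (1 - \<gamma>) / T) * (trace L / d - u \<bullet> (L *v u)) \<le> (\<gamma> + (1 - \<gamma>) / T) * 2"
    using g T by (intro mult_left_mono) auto
  also have "\<dots> \<le> 2 * \<gamma> + 2 / T" using g T by (simp add: field_simps)
  finally have "(\<gamma> + (1 - \<gamma>) / T) * (trace L / d - u \<bullet> (L *v u)) \<le> 2 * \<gamma> + 2 / T" .
  moreover have "(1 - \<gamma>) * frob W L + \<gamma> * (trace L / d) - u \<bullet> (L *v u)
      = (1 - \<gamma>) * (frob W L - frob U L) + (\<gamma> + (1 - \<gamma>) / T) * (trace L / d - u \<bullet> (L *v u))"
    using T by (simp add: fU algebra_simps diff_divide_distrib add_divide_distrib)
  ultimately show ?thesis unfolding U_def[symmetric] E1 E2 frob_diff_left[of W U L] by linarith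
qed

section \<open>Regret over \<open>T\<close> rounds\<close>

lemma pathwise_regret_le:
  fixes eig :: "'n::finite eigfun"
  assumes ev: "valid_eig eig" and eta: "\<eta> > 0"
    and pd: "\<forall>h\<in>set_pmf (traj mode \<gamma> \<eta> eig env T). \<forall>t<T. posdef (matrix_inv (Wt \<eta> h t) + \<eta> *\<^sub>R Lth h t)"
    and h: "h \<in> set_pmf (traj mode \<gamma> \<eta> eig env T)"
    and U: "posdef U" "density U"
  shows "(\<Sum>t<T. frob (Wt \<eta> h t - U) (Lth h t)) \<le> logdet_div U W1 / \<eta> +
           (\<Sum>t<T. frob (Wt \<eta> h t - Wtil \<eta> (Wt \<eta> h t) (Lth h t)) (Lth h t))"
proof -
  have len: "length h = T" using h by (rule length_traj)
  have inv: "\<And>t. t \<le> T \<Longrightarrow> posdef (Wt \<eta> h t) \<and> density (Wt \<eta> h t)"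
    by (rule Wt_posdef_density[OF ev pd h])
  define D where "D = (\<lambda>t. logdet_div U (Wt \<eta> h t))"
  define X where "X = (\<lambda>t. frob (Wt \<eta> h t - U) (Lth h t))"
  define Z where "Z = (\<lambda>t. frob (Wt \<eta> h t - Wtil \<eta> (Wt \<eta> h t) (Lth h t)) (Lth h t))"
  have step: "\<eta> * X t \<le> (D t - D (Suc t)) + \<eta> * Z t" if "t < T" for t
  proof -
    have Wp: "posdef (Wt \<eta> h t)" using inv[of t] that by simp
    have A: "posdef (matrix_inv (Wt \<eta> h t) + \<eta> *\<^sub>R Lth h t)" using pd h that by simp
    have "Wt \<eta> h (Suc t) = proj (Wtil \<eta> (Wt \<eta> h t) (Lth h t))"
      using Wt_Suc[of t h \<eta>] len that by simp
    thus ?thesis using mirror_descent_step[OF ev Wp A U] by (simp add: D_def X_def Z_def)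
  qed
  have "\<eta> * (\<Sum>t<T. X t) = (\<Sum>t<T. \<eta> * X t)" by (simp add: sum_distrib_left)
  also have "\<dots> \<le> (\<Sum>t<T. (D t - D (Suc t)) + \<eta> * Z t)" by (rule sum_mono) (simp add: step)
  also have "\<dots> = (D 0 - D T) + \<eta> * (\<Sum>t<T. Z t)"
    by (simp add: sum.distrib sum_lessThan_telescope' sum_distrib_left)
  finally have main: "\<eta> * (\<Sum>t<T. X t) \<le> (D 0 - D T) + \<eta> * (\<Sum>t<T. Z t)" .
  have DT: "D T \<ge> 0"
    using logdet_div_nonneg[OF ev U(1), of "Wt \<eta> h T"] inv[of T] by (simp add: D_def)
  have D0: "D 0 = logdet_div U W1" by (simp add: D_def Wt_def)
  have "\<eta> * (\<Sum>t<T. X t) \<le> \<eta> * (logdet_div U W1 / \<eta> + (\<Sum>t<T. Z t))"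
    using main DT D0 eta by (simp add: algebra_simps)
  hence "(\<Sum>t<T. X t) \<le> logdet_div U W1 / \<eta> + (\<Sum>t<T. Z t)"
    using eta by (simp only: mult_le_cancel_left_pos)
  thus ?thesis by (simp add: X_def Z_def)
qed

lemma expected_round_regret_traj_le:
  fixes eig :: "'n::finite eigfun" and u :: "real^'n"
  assumes ev: "valid_eig eig"
    and mode: "(mode = Sparse \<and> 0 \<le> \<gamma> \<and> \<gamma> \<le> 1) \<or> (mode = Dense \<and> \<gamma> = 0)"
    and env: "\<forall>h. symmetric_mat (env h) \<and> spec_norm (env h) \<le> 1"
    and pd: "\<forall>h\<in>set_pmf (traj mode \<gamma> \<eta> eig env T). \<forall>t<T. posdef (matrix_inv (Wt \<eta> h t) + \<eta> *\<^sub>R Lth h t)"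
    and t: "t < T" and un: "norm u = 1"
  shows "measure_pmf.expectation (traj mode \<gamma> \<eta> eig env T)
      (\<lambda>h. frob (outer (wh h t) (wh h t) - outer u u) (Lh h t))
    \<le> (1 - \<gamma>) * measure_pmf.expectation (traj mode \<gamma> \<eta> eig env T)
      (\<lambda>h. frob (Wt \<eta> h t - comparator (real T) u) (Lth h t)) + (2 * \<gamma> + 2 / real T)"
proof -
  let ?Q = "traj mode \<gamma> \<eta> eig env t"
  let ?S = "\<lambda>h. samp mode \<gamma> eig (Wfrom \<eta> W1 h) (env h)"
  define U where "U = comparator (real T) u"
  have T1: "real T \<ge> 1" using t by simp
  have "measure_pmf.expectation ?Q (\<lambda>h. measure_pmf.expectation (?S h)
         (\<lambda>(w, Lt). frob (outer w w - outer u u) (env h))) \<le>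
        measure_pmf.expectation ?Q (\<lambda>h. (1 - \<gamma>) * measure_pmf.expectation (?S h)
         (\<lambda>(w, Lt). frob (Wfrom \<eta> W1 h - U) Lt) + (2 * \<gamma> + 2 / real T))"
  proof (rule expectation_mono[OF finite_set_pmf_traj])
    fix h' assume h': "h' \<in> set_pmf ?Q"
    obtain h where h: "h \<in> set_pmf (traj mode \<gamma> \<eta> eig env T)" and hh: "h' = take t h"
      using set_pmf_traj_take[OF less_imp_le[OF t] h'] by blast
    have "posdef (Wt \<eta> h t) \<and> density (Wt \<eta> h t)" using Wt_posdef_density[OF ev pd h] t by simp
    hence "posdef (Wfrom \<eta> W1 h')" "density (Wfrom \<eta> W1 h')" by (simp_all add: Wt_def hh)
    thus "measure_pmf.expectation (?S h') (\<lambda>(w, Lt). frob (outer w w - outer u u) (env h')) \<le>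
        (1 - \<gamma>) * measure_pmf.expectation (?S h') (\<lambda>(w, Lt). frob (Wfrom \<eta> W1 h' - U) Lt)
        + (2 * \<gamma> + 2 / real T)"
      using expected_round_regret_le[OF ev _ _ mode, of "Wfrom \<eta> W1 h'" "env h'" u "real T"] env un T1
      by (simp add: U_def)
  qed
  also have "\<dots> = (1 - \<gamma>) * measure_pmf.expectation ?Q (\<lambda>h. measure_pmf.expectation (?S h)
         (\<lambda>(w, Lt). frob (Wfrom \<eta> W1 h - U) Lt)) + (2 * \<gamma> + 2 / real T)"
    by (rule expectation_affine[OF finite_set_pmf_traj])
  finally show ?thesis
    using expectation_traj_round[OF t, of mode \<gamma> \<eta> eig env "\<lambda>h' L w Lt. frob (outer w w - outer u u) L"]
      expectation_traj_round[OF t, of mode \<gamma> \<eta> eig env "\<lambda>h' L w Lt. frob (Wfrom \<eta> W1 h' - U) Lt"]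
    by (simp add: U_def Wt_def)
qed

lemma expected_comparator_sum_le:
  fixes eig :: "'n::finite eigfun" and U :: "real^'n^'n"
  assumes ev: "valid_eig eig" and eta: "\<eta> > 0"
    and pd: "\<forall>h\<in>set_pmf (traj mode \<gamma> \<eta> eig env T). \<forall>t<T. posdef (matrix_inv (Wt \<eta> h t) + \<eta> *\<^sub>R Lth h t)"
    and U: "posdef U" "density U"
  shows "(\<Sum>t<T. measure_pmf.expectation (traj mode \<gamma> \<eta> eig env T) (\<lambda>h. frob (Wt \<eta> h t - U) (Lth h t)))
    \<le> logdet_div U W1 / \<eta> + (\<Sum>t<T. measure_pmf.expectation (traj mode \<gamma> \<eta> eig env T)
        (\<lambda>h. frob (Wt \<eta> h t - Wtil \<eta> (Wt \<eta> h t) (Lth h t)) (Lth h t)))"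
  (is "(\<Sum>t<T. measure_pmf.expectation ?P (?Y t)) \<le> ?D + (\<Sum>t<T. measure_pmf.expectation ?P (?Z t))")
proof -
  have fin: "finite (set_pmf ?P)" by (rule finite_set_pmf_traj)
  have "(\<Sum>t<T. measure_pmf.expectation ?P (?Y t)) = measure_pmf.expectation ?P (\<lambda>h. \<Sum>t<T. ?Y t h)"
    by (rule expectation_sum[OF fin, symmetric])
  also have "\<dots> \<le> measure_pmf.expectation ?P (\<lambda>h. 1 * (\<Sum>t<T. ?Z t h) + ?D)"
    using pathwise_regret_le[OF ev eta pd _ U]
    by (intro expectation_mono[OF fin]) (simp add: add_ac)
  also have "\<dots> = (\<Sum>t<T. measure_pmf.expectation ?P (?Z t)) + ?D"
    by (simp only: expectation_affine[OF fin] expectation_sum[OF fin])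
  finally show ?thesis by simp
qed

lemma regret_against_unit_vector_le:
  fixes eig :: "'n::finite eigfun" and u :: "real^'n"
  assumes ev: "valid_eig eig" and T: "T \<ge> 1" and eta: "\<eta> > 0"
    and mode: "(mode = Sparse \<and> 0 \<le> \<gamma> \<and> \<gamma> \<le> 1) \<or> (mode = Dense \<and> \<gamma> = 0)"
    and env: "\<forall>h. symmetric_mat (env h) \<and> spec_norm (env h) \<le> 1"
    and pd: "\<forall>h\<in>set_pmf (traj mode \<gamma> \<eta> eig env T). \<forall>t<T. posdef (matrix_inv (Wt \<eta> h t) + \<eta> *\<^sub>R Lth h t)"
    and un: "norm u = 1"
  shows "(\<Sum>t<T. measure_pmf.expectation (traj mode \<gamma> \<eta> eig env T)
      (\<lambda>h. frob (outer (wh h t) (wh h t) - outer u u) (Lh h t)))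
    \<le> real CARD('n) * ln (real T) / \<eta> + 2 * \<gamma> * real T + 2
      + (1 - \<gamma>) * (\<Sum>t<T. measure_pmf.expectation (traj mode \<gamma> \<eta> eig env T)
        (\<lambda>h. frob (Wt \<eta> h t - Wtil \<eta> (Wt \<eta> h t) (Lth h t)) (Lth h t)))"
proof -
  let ?P = "traj mode \<gamma> \<eta> eig env T"
  define U where "U = comparator (real T) u"
  define D where "D = logdet_div U W1"
  define Y where "Y = (\<Sum>t<T. measure_pmf.expectation ?P (\<lambda>h. frob (Wt \<eta> h t - U) (Lth h t)))"
  define Z where "Z = (\<Sum>t<T. measure_pmf.expectation ?P
      (\<lambda>h. frob (Wt \<eta> h t - Wtil \<eta> (Wt \<eta> h t) (Lth h t)) (Lth h t)))"
  have g: "0 \<le> \<gamma>" "\<gamma> \<le> 1" using mode by auto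
  have T1: "real T \<ge> 1" using T by simp
  have U: "posdef U" "density U" using posdef_density_comparator[OF un T1] by (simp_all add: U_def)
  have "(\<Sum>t<T. measure_pmf.expectation ?P (\<lambda>h. frob (outer (wh h t) (wh h t) - outer u u) (Lh h t)))
      \<le> (\<Sum>t<T. (1 - \<gamma>) * measure_pmf.expectation ?P (\<lambda>h. frob (Wt \<eta> h t - U) (Lth h t))
          + (2 * \<gamma> + 2 / real T))"
    using expected_round_regret_traj_le[OF ev mode env pd _ un]
    by (intro sum_mono) (simp add: U_def)
  also have "\<dots> = (1 - \<gamma>) * Y + real T * (2 * \<gamma> + 2 / real T)"
    by (simp add: Y_def sum.distrib sum_distrib_left)
  also have "real T * (2 * \<gamma> + 2 / real T) = 2 * \<gamma> * real T + 2"
    using T1 by (simp add: field_simps)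
  also have "(1 - \<gamma>) * Y \<le> (1 - \<gamma>) * (D / \<eta> + Z)"
    using expected_comparator_sum_le[OF ev eta pd U] g
    by (intro mult_left_mono) (simp_all add: Y_def Z_def D_def)
  also have "(1 - \<gamma>) * (D / \<eta> + Z) \<le> real CARD('n) * ln (real T) / \<eta> + (1 - \<gamma>) * Z"
  proof -
    have "(1 - \<gamma>) * (D / \<eta>) \<le> D / \<eta>"
      using g eta logdet_div_nonneg[OF ev U(1) conjunct1[OF posdef_density_W1]]
      by (intro mult_left_le_one_le) (simp_all add: D_def)
    moreover have "D / \<eta> \<le> real CARD('n) * ln (real T) / \<eta>"
      using logdet_div_comparator_W1_le[OF ev un T1] eta
      by (simp add: D_def U_def divide_right_mono)
    ultimately show ?thesis unfolding distrib_left by linarith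
  qed
  finally show ?thesis by (simp add: Z_def)
qed

text \<open>Only \<open>T \<ge> 1\<close> is needed below.\<close>

theorem lemma3:
  fixes mode :: sampling and \<gamma> \<eta> :: real and T :: nat
    and eig :: "'n::finite eigfun" and env :: "'n hist \<Rightarrow> 'n rmat"
  assumes "CARD('n) \<ge> 2" and "T \<ge> 2" and "\<eta> > 0"
    and "(mode = Sparse \<and> 0 \<le> \<gamma> \<and> \<gamma> \<le> 1) \<or> (mode = Dense \<and> \<gamma> = 0)"
    and "valid_eig eig"
    and "\<forall>h. symmetric_mat (env h) \<and> spec_norm (env h) \<le> 1"
    and "\<forall>h\<in>set_pmf (traj mode \<gamma> \<eta> eig env T). \<forall>t<T.
           posdef (matrix_inv (Wt \<eta> h t) + \<eta> *\<^sub>R Lth h t)"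
  shows "regret mode \<gamma> \<eta> eig env T \<le>
           real CARD('n) * ln (real T) / \<eta> + 2 * \<gamma> * real T + 2
           + (1 - \<gamma>) * (\<Sum>t<T. measure_pmf.expectation (traj mode \<gamma> \<eta> eig env T)
                 (\<lambda>h. frob (Wt \<eta> h t - Wtil \<eta> (Wt \<eta> h t) (Lth h t)) (Lth h t)))"
proof -
  have "T \<ge> 1" using assms(2) by simp
  note bound = regret_against_unit_vector_le[OF assms(5) this assms(3,4,6,7)]
  have "norm (axis (undefined :: 'n) (1 :: real)) = 1" by (rule norm_axis_1)
  hence "{u :: real^'n. norm u = 1} \<noteq> {}" by blast
  thus ?thesis unfolding regret_def by (rule cSUP_least) (use bound in auto)
qed

end
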